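(* Let $\mathcal G$ be a topological $2$-group, $X$ a topological space, $\mathcal U=\{U_i\}_{i\in I}$ an open cover of $X$, and let $c,c'$ be $\mathcal G$-valued Čech cocycles subordinate to $\mathcal U$. Then $c$ and $c'$ are cohomologous if and only if there is a $\mathcal G$-bundle morphism between $\pi_c$ and $\pi_{c'}$.
   Context: Notation: topological $2$-groups $\mathcal G=(\mathcal G_1\rightrightarrows\mathcal G_0)$ (groupoids internal to topological groups, product $g*h=h1_{t(g)^{-1}}g$), $\mathcal E=\mathrm{Ker}(s)$ with ${}^xe=1_xe1_{x^{-1}}$; $U_{i_1\cdots i_n}=U_{i_1}\cap\dots\cap U_{i_n}$. A $\mathcal G$-valued Čech cocycle subordinate to $\mathcal U$ is $c=(\mathbf x,\mathbf e)$, $\mathbf x_{ij}\colon U_{ij}\to\mathcal G_0$, $\mathbf e_{ijk}\colon U_{ijk}\to\mathcal E$ continuous, with $t(\mathbf e_{ijk})\mathbf x_{ij}\mathbf x_{jk}=\mathbf x_{ik}$ and $\mathbf e_{ikl}\mathbf e_{ijk}=\mathbf e_{ijl}\,{}^{\mathbf x_{ij}}\mathbf e_{jkl}$. Cocycles $(\mathbf x,\mathbf e)$, $(\mathbf x',\mathbf e')$ are cohomologous if there are continuous $a_i\colon U_i\to\mathcal G_0$, $d_{ij}\colon U_{ij}\to\mathcal E$ with $\mathbf x'_{ij}=a_it(d_{ij})\mathbf x_{ij}a_j^{-1}$ on $U_{ij}$ and $\mathbf e'_{ijk}={}^{a_i}\bigl(d_{ik}\mathbf e_{ijk}\,{}^{\mathbf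 x_{ij}}(d_{jk}^{-1})d_{ij}^{-1}\bigr)$ on $U_{ijk}$. To a cocycle $c$ is associated the principal $\mathcal G$-bundle $\pi_c\colon P_c\to\overline X$: $P_0=\coprod_iU_i\times\mathcal G_0$, $P_1=\coprod_{i,j}U_{ij}\times\mathcal G_1$, $s((v,g)_{ij})=(v,s(g))_i$, $t((v,g)_{ij})=(v,\mathbf x_{ij}(v)^{-1}t(g))_j$, $(v,g)_{ij}*(v,h)_{jk}=(v,\mathbf e_{ijk}(v)(g*(1_{\mathbf x_{ij}(v)}h)))_{ik}$, right $\mathcal G$-action by right multiplication in the second coordinate, $\pi_c$ the projection to $X$ ($\overline X=(X\rightrightarrows X)$). A $\mathcal G$-bundle morphism from $\pi\colon P\to\overline X$ to $\pi'\colon P'\to\overline X$ is a $\mathcal G$-equivariant continuous functor $f\colon P\to P'$ with $\pi'f=\pi$. *)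

theory Defs
  imports "HOL-Analysis.Analysis" "HOL-Algebra.Group"
begin

definition topological_group :: "'a monoid \<Rightarrow> 'a topology \<Rightarrow> bool" where
  "topological_group G T \<longleftrightarrow> group G \<and> topspace T = carrier G
     \<and> continuous_map (prod_topology T T) T (\<lambda>p. fst p \<otimes>\<^bsub>G\<^esub> snd p)
     \<and> continuous_map T T (\<lambda>x. inv\<^bsub>G\<^esub> x)"

text \<open>Composition is diagrammatic: cmp g h is defined when tgt g = src h.\<close>

record ('a, 'b) two_group =
  G0 :: "'a monoid"
  T0 :: "'a topology"
  G1 :: "'b monoid"
  T1 :: "'b topology"
  src :: "'b \<Rightarrow> 'a"
  tgt :: "'b \<Rightarrow> 'a"
  idn :: "'a \<Rightarrow> 'b"
  cmp :: "'b \<Rightarrow> 'b \<Rightarrow> 'b"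
  ginv :: "'b \<Rightarrow> 'b"

definition comp_pairs :: "('a, 'b) two_group \<Rightarrow> ('b \<times> 'b) set" where
  "comp_pairs \<Gamma> = {(g, h). g \<in> carrier (G1 \<Gamma>) \<and> h \<in> carrier (G1 \<Gamma>) \<and> tgt \<Gamma> g = src \<Gamma> h}"

definition topological_2group :: "('a, 'b) two_group \<Rightarrow> bool" where
  "topological_2group \<Gamma> \<longleftrightarrow>
     topological_group (G0 \<Gamma>) (T0 \<Gamma>) \<and> topological_group (G1 \<Gamma>) (T1 \<Gamma>)
   \<comment> \<open>structure maps are homomorphisms\<close>
   \<and> src \<Gamma> \<in> hom (G1 \<Gamma>) (G0 \<Gamma>) \<and> tgt \<Gamma> \<in> hom (G1 \<Gamma>) (G0 \<Gamma>)
   \<and> idn \<Gamma> \<in> hom (G0 \<Gamma>) (G1 \<Gamma>) \<and> ginv \<Gamma> \<in> hom (G1 \<Gamma>) (G1 \<Gamma>)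
   \<and> (\<forall>(g, h) \<in> comp_pairs \<Gamma>. cmp \<Gamma> g h \<in> carrier (G1 \<Gamma>))
   \<and> (\<forall>(g, h) \<in> comp_pairs \<Gamma>. \<forall>(g', h') \<in> comp_pairs \<Gamma>.
        cmp \<Gamma> (g \<otimes>\<^bsub>G1 \<Gamma>\<^esub> g') (h \<otimes>\<^bsub>G1 \<Gamma>\<^esub> h')
          = cmp \<Gamma> g h \<otimes>\<^bsub>G1 \<Gamma>\<^esub> cmp \<Gamma> g' h')
   \<comment> \<open>structure maps are continuous\<close>
   \<and> continuous_map (T1 \<Gamma>) (T0 \<Gamma>) (src \<Gamma>) \<and> continuous_map (T1 \<Gamma>) (T0 \<Gamma>) (tgt \<Gamma>)
   \<and> continuous_map (T0 \<Gamma>) (T1 \<Gamma>) (idn \<Gamma>) \<and> continuous_map (T1 \<Gamma>) (T1 \<Gamma>) (ginv \<Gamma>)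
   \<and> continuous_map (subtopology (prod_topology (T1 \<Gamma>) (T1 \<Gamma>)) (comp_pairs \<Gamma>)) (T1 \<Gamma>)
        (\<lambda>p. cmp \<Gamma> (fst p) (snd p))
   \<comment> \<open>groupoid axioms\<close>
   \<and> (\<forall>x \<in> carrier (G0 \<Gamma>). src \<Gamma> (idn \<Gamma> x) = x \<and> tgt \<Gamma> (idn \<Gamma> x) = x)
   \<and> (\<forall>(g, h) \<in> comp_pairs \<Gamma>. src \<Gamma> (cmp \<Gamma> g h) = src \<Gamma> g \<and> tgt \<Gamma> (cmp \<Gamma> g h) = tgt \<Gamma> h)
   \<and> (\<forall>g \<in> carrier (G1 \<Gamma>). cmp \<Gamma> (idn \<Gamma> (src \<Gamma> g)) g = g \<and> cmp \<Gamma> g (idn \<Gamma> (tgt \<Gamma> g)) = g)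
   \<and> (\<forall>f \<in> carrier (G1 \<Gamma>). \<forall>g \<in> carrier (G1 \<Gamma>). \<forall>h \<in> carrier (G1 \<Gamma>).
        tgt \<Gamma> f = src \<Gamma> g \<longrightarrow> tgt \<Gamma> g = src \<Gamma> h \<longrightarrow>
        cmp \<Gamma> (cmp \<Gamma> f g) h = cmp \<Gamma> f (cmp \<Gamma> g h))
   \<and> (\<forall>g \<in> carrier (G1 \<Gamma>). src \<Gamma> (ginv \<Gamma> g) = tgt \<Gamma> g \<and> tgt \<Gamma> (ginv \<Gamma> g) = src \<Gamma> g
        \<and> cmp \<Gamma> g (ginv \<Gamma> g) = idn \<Gamma> (src \<Gamma> g) \<and> cmp \<Gamma> (ginv \<Gamma> g) g = idn \<Gamma> (tgt \<Gamma> g))"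

definition kerE :: "('a, 'b) two_group \<Rightarrow> 'b set" where
  "kerE \<Gamma> = {g \<in> carrier (G1 \<Gamma>). src \<Gamma> g = \<one>\<^bsub>G0 \<Gamma>\<^esub>}"

definition conjact :: "('a, 'b) two_group \<Rightarrow> 'a \<Rightarrow> 'b \<Rightarrow> 'b" where
  "conjact \<Gamma> x e = idn \<Gamma> x \<otimes>\<^bsub>G1 \<Gamma>\<^esub> e \<otimes>\<^bsub>G1 \<Gamma>\<^esub> idn \<Gamma> (inv\<^bsub>G0 \<Gamma>\<^esub> x)"

definition open_cover :: "'x topology \<Rightarrow> 'i set \<Rightarrow> ('i \<Rightarrow> 'x set) \<Rightarrow> bool" where
  "open_cover X I U \<longleftrightarrow> (\<forall>i \<in> I. openin X (U i)) \<and> (\<Union>i \<in> I. U i) = topspace X"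

definition cech_cocycle ::
  "('a, 'b) two_group \<Rightarrow> 'x topology \<Rightarrow> 'i set \<Rightarrow> ('i \<Rightarrow> 'x set)
     \<Rightarrow> ('i \<Rightarrow> 'i \<Rightarrow> 'x \<Rightarrow> 'a) \<times> ('i \<Rightarrow> 'i \<Rightarrow> 'i \<Rightarrow> 'x \<Rightarrow> 'b) \<Rightarrow> bool" where
  "cech_cocycle \<Gamma> X I U c \<longleftrightarrow>
     (\<forall>i \<in> I. \<forall>j \<in> I. continuous_map (subtopology X (U i \<inter> U j)) (T0 \<Gamma>) (fst c i j))
   \<and> (\<forall>i \<in> I. \<forall>j \<in> I. \<forall>k \<in> I.
        continuous_map (subtopology X (U i \<inter> U j \<inter> U k)) (subtopology (T1 \<Gamma>) (kerE \<Gamma>)) (snd c i j k))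
   \<and> (\<forall>i \<in> I. \<forall>j \<in> I. \<forall>k \<in> I. \<forall>v \<in> U i \<inter> U j \<inter> U k.
        tgt \<Gamma> (snd c i j k v) \<otimes>\<^bsub>G0 \<Gamma>\<^esub> fst c i j v \<otimes>\<^bsub>G0 \<Gamma>\<^esub> fst c j k v = fst c i k v)
   \<and> (\<forall>i \<in> I. \<forall>j \<in> I. \<forall>k \<in> I. \<forall>l \<in> I. \<forall>v \<in> U i \<inter> U j \<inter> U k \<inter> U l.
        snd c i k l v \<otimes>\<^bsub>G1 \<Gamma>\<^esub> snd c i j k v
          = snd c i j l v \<otimes>\<^bsub>G1 \<Gamma>\<^esub> conjact \<Gamma> (fst c i j v) (snd c j k l v))"

definition cohomologous ::
  "('a, 'b) two_group \<Rightarrow> 'x topology \<Rightarrow> 'i set \<Rightarrow> ('i \<Rightarrow> 'x set)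
     \<Rightarrow> ('i \<Rightarrow> 'i \<Rightarrow> 'x \<Rightarrow> 'a) \<times> ('i \<Rightarrow> 'i \<Rightarrow> 'i \<Rightarrow> 'x \<Rightarrow> 'b)
     \<Rightarrow> ('i \<Rightarrow> 'i \<Rightarrow> 'x \<Rightarrow> 'a) \<times> ('i \<Rightarrow> 'i \<Rightarrow> 'i \<Rightarrow> 'x \<Rightarrow> 'b) \<Rightarrow> bool" where
  "cohomologous \<Gamma> X I U c c' \<longleftrightarrow>
     (\<exists>(a :: 'i \<Rightarrow> 'x \<Rightarrow> 'a) (d :: 'i \<Rightarrow> 'i \<Rightarrow> 'x \<Rightarrow> 'b).
        (\<forall>i \<in> I. continuous_map (subtopology X (U i)) (T0 \<Gamma>) (a i))
      \<and> (\<forall>i \<in> I. \<forall>j \<in> I.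
           continuous_map (subtopology X (U i \<inter> U j)) (subtopology (T1 \<Gamma>) (kerE \<Gamma>)) (d i j))
      \<and> (\<forall>i \<in> I. \<forall>j \<in> I. \<forall>v \<in> U i \<inter> U j.
           fst c' i j v = a i v \<otimes>\<^bsub>G0 \<Gamma>\<^esub> tgt \<Gamma> (d i j v) \<otimes>\<^bsub>G0 \<Gamma>\<^esub> fst c i j v
                            \<otimes>\<^bsub>G0 \<Gamma>\<^esub> inv\<^bsub>G0 \<Gamma>\<^esub> (a j v))
      \<and> (\<forall>i \<in> I. \<forall>j \<in> I. \<forall>k \<in> I. \<forall>v \<in> U i \<inter> U j \<inter> U k.
           snd c' i j k v = conjact \<Gamma> (a i v)
             (d i k v \<otimes>\<^bsub>G1 \<Gamma>\<^esub> snd c i j k v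
                \<otimes>\<^bsub>G1 \<Gamma>\<^esub> conjact \<Gamma> (fst c i j v) (inv\<^bsub>G1 \<Gamma>\<^esub> (d j k v))
                \<otimes>\<^bsub>G1 \<Gamma>\<^esub> inv\<^bsub>G1 \<Gamma>\<^esub> (d i j v))))"

text \<open>Objects: (i, (v, g)) with i in I, v in U i, g in G0  (coproduct of U_i x G0).
  Arrows: ((i, j), (v, g)) with (i,j) in I x I, v in U_ij, g in G1.\<close>

definition P0_top :: "('a, 'b) two_group \<Rightarrow> 'x topology \<Rightarrow> 'i set \<Rightarrow> ('i \<Rightarrow> 'x set)
     \<Rightarrow> ('i \<times> ('x \<times> 'a)) topology" where
  "P0_top \<Gamma> X I U = sum_topology (\<lambda>i. prod_topology (subtopology X (U i)) (T0 \<Gamma>)) I"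

definition P1_top :: "('a, 'b) two_group \<Rightarrow> 'x topology \<Rightarrow> 'i set \<Rightarrow> ('i \<Rightarrow> 'x set)
     \<Rightarrow> (('i \<times> 'i) \<times> ('x \<times> 'b)) topology" where
  "P1_top \<Gamma> X I U =
     sum_topology (\<lambda>(i, j). prod_topology (subtopology X (U i \<inter> U j)) (T1 \<Gamma>)) (I \<times> I)"

definition P_src :: "('a, 'b) two_group
     \<Rightarrow> ('i \<Rightarrow> 'i \<Rightarrow> 'x \<Rightarrow> 'a) \<times> ('i \<Rightarrow> 'i \<Rightarrow> 'i \<Rightarrow> 'x \<Rightarrow> 'b)
     \<Rightarrow> ('i \<times> 'i) \<times> ('x \<times> 'b) \<Rightarrow> 'i \<times> ('x \<times> 'a)" where
  "P_src \<Gamma> c p = (case p of ((i, j), (v, g)) \<Rightarrow> (i, (v, src \<Gamma> g)))"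

definition P_tgt :: "('a, 'b) two_group
     \<Rightarrow> ('i \<Rightarrow> 'i \<Rightarrow> 'x \<Rightarrow> 'a) \<times> ('i \<Rightarrow> 'i \<Rightarrow> 'i \<Rightarrow> 'x \<Rightarrow> 'b)
     \<Rightarrow> ('i \<times> 'i) \<times> ('x \<times> 'b) \<Rightarrow> 'i \<times> ('x \<times> 'a)" where
  "P_tgt \<Gamma> c p = (case p of ((i, j), (v, g)) \<Rightarrow>
      (j, (v, inv\<^bsub>G0 \<Gamma>\<^esub> (fst c i j v) \<otimes>\<^bsub>G0 \<Gamma>\<^esub> tgt \<Gamma> g)))"

definition P_cmp :: "('a, 'b) two_group
     \<Rightarrow> ('i \<Rightarrow> 'i \<Rightarrow> 'x \<Rightarrow> 'a) \<times> ('i \<Rightarrow> 'i \<Rightarrow> 'i \<Rightarrow> 'x \<Rightarrow> 'b)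
     \<Rightarrow> ('i \<times> 'i) \<times> ('x \<times> 'b) \<Rightarrow> ('i \<times> 'i) \<times> ('x \<times> 'b) \<Rightarrow> ('i \<times> 'i) \<times> ('x \<times> 'b)" where
  "P_cmp \<Gamma> c p q = (case p of ((i, j), (v, g)) \<Rightarrow> case q of ((j', k), (v', h)) \<Rightarrow>
      ((i, k), (v, snd c i j k v \<otimes>\<^bsub>G1 \<Gamma>\<^esub>
                   cmp \<Gamma> g (idn \<Gamma> (fst c i j v) \<otimes>\<^bsub>G1 \<Gamma>\<^esub> h))))"

definition P0_act :: "('a, 'b) two_group \<Rightarrow> 'i \<times> ('x \<times> 'a) \<Rightarrow> 'a \<Rightarrow> 'i \<times> ('x \<times> 'a)" where
  "P0_act \<Gamma> p y = (case p of (i, (v, g)) \<Rightarrow> (i, (v, g \<otimes>\<^bsub>G0 \<Gamma>\<^esub> y)))"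

definition P1_act :: "('a, 'b) two_group \<Rightarrow> ('i \<times> 'i) \<times> ('x \<times> 'b) \<Rightarrow> 'b
     \<Rightarrow> ('i \<times> 'i) \<times> ('x \<times> 'b)" where
  "P1_act \<Gamma> q h = (case q of (ij, (v, g)) \<Rightarrow> (ij, (v, g \<otimes>\<^bsub>G1 \<Gamma>\<^esub> h)))"

definition P0_proj :: "'i \<times> ('x \<times> 'a) \<Rightarrow> 'x" where
  "P0_proj p = fst (snd p)"

definition P1_proj :: "('i \<times> 'i) \<times> ('x \<times> 'b) \<Rightarrow> 'x" where
  "P1_proj q = fst (snd q)"

definition bundle_morphism ::
  "('a, 'b) two_group \<Rightarrow> 'x topology \<Rightarrow> 'i set \<Rightarrow> ('i \<Rightarrow> 'x set)
     \<Rightarrow> ('i \<Rightarrow> 'i \<Rightarrow> 'x \<Rightarrow> 'a) \<times> ('i \<Rightarrow> 'i \<Rightarrow> 'i \<Rightarrow> 'x \<Rightarrow> 'b)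
     \<Rightarrow> ('i \<Rightarrow> 'i \<Rightarrow> 'x \<Rightarrow> 'a) \<times> ('i \<Rightarrow> 'i \<Rightarrow> 'i \<Rightarrow> 'x \<Rightarrow> 'b)
     \<Rightarrow> ('i \<times> ('x \<times> 'a) \<Rightarrow> 'i \<times> ('x \<times> 'a))
     \<Rightarrow> (('i \<times> 'i) \<times> ('x \<times> 'b) \<Rightarrow> ('i \<times> 'i) \<times> ('x \<times> 'b)) \<Rightarrow> bool" where
  "bundle_morphism \<Gamma> X I U c c' f0 f1 \<longleftrightarrow>
     continuous_map (P0_top \<Gamma> X I U) (P0_top \<Gamma> X I U) f0
   \<and> continuous_map (P1_top \<Gamma> X I U) (P1_top \<Gamma> X I U) f1
   \<and> (\<forall>q \<in> topspace (P1_top \<Gamma> X I U).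
        P_src \<Gamma> c' (f1 q) = f0 (P_src \<Gamma> c q) \<and> P_tgt \<Gamma> c' (f1 q) = f0 (P_tgt \<Gamma> c q))
   \<and> (\<forall>p \<in> topspace (P1_top \<Gamma> X I U). \<forall>q \<in> topspace (P1_top \<Gamma> X I U).
        P_tgt \<Gamma> c p = P_src \<Gamma> c q \<longrightarrow> f1 (P_cmp \<Gamma> c p q) = P_cmp \<Gamma> c' (f1 p) (f1 q))
   \<and> (\<forall>p \<in> topspace (P0_top \<Gamma> X I U). \<forall>y \<in> carrier (G0 \<Gamma>).
        f0 (P0_act \<Gamma> p y) = P0_act \<Gamma> (f0 p) y)
   \<and> (\<forall>q \<in> topspace (P1_top \<Gamma> X I U). \<forall>h \<in> carrier (G1 \<Gamma>).
        f1 (P1_act \<Gamma> q h) = P1_act \<Gamma> (f1 q) h)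
   \<and> (\<forall>p \<in> topspace (P0_top \<Gamma> X I U). P0_proj (f0 p) = P0_proj p)
   \<and> (\<forall>q \<in> topspace (P1_top \<Gamma> X I U). P1_proj (f1 q) = P1_proj q)"

end

(* A morphism P_c -> P_c' that keeps every chart is left multiplication in the fibres by continuous
   a_i : U_i -> G0 on objects and b_ij : U_ij -> G1 on arrows. For a cohomology (a, d) one takes
   b_ij = 1_(a_i) d_ij; since the interchange law forces g * h = h 1_(t(g)^-1) g, functoriality comes
   down to the Peiffer identity.
   Conversely, a morphism sends the unit over v in the chart i into some chart K_i(v), locally
   constant in v because P_0 is a disjoint union of charts, with an offset y_i(v) in G0, and the unit
   arrow over v in the charts i, j to an offset h_ij(v) in G1. Moving K_i back to i along the
   transition x'_(i K_i) of c' gives a_i = x'_(i K_i) y_i, and the 2-cocycle identity of c'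
   transports functoriality on composites into the relation between e, e' and d. *)

theory Submission
  imports Defs
begin

lemma continuous_map_from_sum_topology:
  assumes "\<And>i. i \<in> I \<Longrightarrow> continuous_map (X i) Y (\<lambda>x. f (i, x))"
  shows "continuous_map (sum_topology X I) Y f"
  unfolding continuous_map_def
proof (intro conjI allI impI)
  show "f \<in> topspace (sum_topology X I) \<rightarrow> topspace Y"
    using assms by (force simp: continuous_map_def)
  fix V assume V: "openin Y V"
  show "openin (sum_topology X I) {x \<in> topspace (sum_topology X I). f x \<in> V}"
    unfolding openin_sum_topology
  proof (intro conjI ballI)
    fix i assume i: "i \<in> I"
    have "{x. (i, x) \<in> {x \<in> topspace (sum_topology X I). f x \<in> V}} = {x \<in> topspace (X i). f (i, x) \<in> V}"
      using i by auto
    then show "openin (X i) {x. (i, x) \<in> {x \<in> topspace (sum_topology X I). f x \<in> V}}"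
      using assms[OF i] V by (simp add: continuous_map_def)
  qed auto
qed

lemma openin_sum_topology_component:
  assumes "k \<in> I"
  shows "openin (sum_topology X I) ({k} \<times> topspace (X k))"
  unfolding openin_sum_topology
proof (intro conjI ballI)
  fix i assume "i \<in> I"
  show "openin (X i) {x. (i, x) \<in> {k} \<times> topspace (X k)}"
    by (cases "i = k") auto
qed (use assms in auto)

lemma continuous_map_subtopology_locally_eq:
  assumes "\<And>v. v \<in> topspace X \<inter> S \<Longrightarrow> \<exists>T g. openin (subtopology X S) T \<and> v \<in> T
             \<and> continuous_map (subtopology X T) Y g \<and> (\<forall>w\<in>T. f w = g w)"
  shows "continuous_map (subtopology X S) Y f"
proof -
  have "\<forall>v \<in> topspace X \<inter> S. \<exists>T. openin (subtopology X S) T \<and> v \<in> T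
             \<and> continuous_map (subtopology (subtopology X S) T) Y f"
  proof
    fix v assume v: "v \<in> topspace X \<inter> S"
    then obtain T g where T: "openin (subtopology X S) T" "v \<in> T"
      "continuous_map (subtopology X T) Y g" "\<forall>w\<in>T. f w = g w"
      using assms by blast
    have "T \<subseteq> topspace X \<inter> S"
      using openin_subset[OF T(1)] by simp
    then have "subtopology (subtopology X S) T = subtopology X T"
      by (simp add: subtopology_subtopology inf.absorb2)
    moreover have "continuous_map (subtopology X T) Y f"
      using T(3) by (rule continuous_map_eq) (use T(4) in simp)
    ultimately show "\<exists>T. openin (subtopology X S) T \<and> v \<in> T
             \<and> continuous_map (subtopology (subtopology X S) T) Y f"
      using T(1,2) by auto
  qed
  then obtain T where T: "\<And>v. v \<in> topspace X \<inter> S \<Longrightarrow> openin (subtopology X S) (T v) \<and> v \<in> T v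
             \<and> continuous_map (subtopology (subtopology X S) (T v)) Y f"
    by metis
  show ?thesis
  proof (rule pasting_lemma[where I = "topspace X \<inter> S" and T = T and f = "\<lambda>_. f"])
    fix x assume "x \<in> topspace (subtopology X S)"
    then show "\<exists>j. j \<in> topspace X \<inter> S \<and> x \<in> T j \<and> f x = f x"
      using T by auto
  qed (use T in auto)
qed

definition fiber_mult :: "('g \<Rightarrow> 'g \<Rightarrow> 'g) \<Rightarrow> ('i \<Rightarrow> 'x \<Rightarrow> 'g) \<Rightarrow> 'i \<times> 'x \<times> 'g \<Rightarrow> 'i \<times> 'x \<times> 'g" where
  "fiber_mult m a p = (case p of (i, v, g) \<Rightarrow> (i, v, m (a i v) g))"

lemma fiber_mult_apply [simp]: "fiber_mult m a (i, v, g) = (i, v, m (a i v) g)"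
  by (simp add: fiber_mult_def)

lemma continuous_map_fiber_mult:
  assumes a: "\<And>i. i \<in> I \<Longrightarrow> continuous_map (S i) G (a i)"
    and m: "continuous_map (prod_topology G G) G (\<lambda>p. m (fst p) (snd p))"
  shows "continuous_map (sum_topology (\<lambda>i. prod_topology (S i) G) I)
           (sum_topology (\<lambda>i. prod_topology (S i) G) I) (fiber_mult m a)"
proof (rule continuous_map_from_sum_topology)
  fix i assume i: "i \<in> I"
  have "continuous_map (prod_topology (S i) G) G (\<lambda>z. m (a i (fst z)) (snd z))"
    using continuous_map_compose[OF continuous_map_pairedI m,
        OF continuous_map_compose[OF continuous_map_fst a[OF i]] continuous_map_snd]
    by (simp add: o_def)
  then have "continuous_map (prod_topology (S i) G) (prod_topology (S i) G)
      (\<lambda>z. (fst z, m (a i (fst z)) (snd z)))"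
    by (intro continuous_map_pairedI continuous_map_fst)
  from continuous_map_compose[OF this continuous_map_component_injection[OF i, of "\<lambda>i. prod_topology (S i) G"]]
  show "continuous_map (prod_topology (S i) G) (sum_topology (\<lambda>i. prod_topology (S i) G) I)
      (\<lambda>z. fiber_mult m a (i, z))"
    by (simp add: o_def case_prod_beta fiber_mult_def)
qed

lemma (in group) inv_mult_cancel_left [simp]:
  "x \<in> carrier G \<Longrightarrow> y \<in> carrier G \<Longrightarrow> inv x \<otimes> (x \<otimes> y) = y"
  by (simp flip: m_assoc)

lemma (in group) mult_inv_cancel_left [simp]:
  "x \<in> carrier G \<Longrightarrow> y \<in> carrier G \<Longrightarrow> x \<otimes> (inv x \<otimes> y) = y"
  by (simp flip: m_assoc)

lemma (in group) mult_eq_mult_solve: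
  assumes "a \<otimes> b = c \<otimes> d" and "a \<in> carrier G" "b \<in> carrier G" "c \<in> carrier G" "d \<in> carrier G"
  shows "b \<otimes> inv d = inv a \<otimes> c"
proof -
  have "inv a \<otimes> c = inv a \<otimes> (c \<otimes> d) \<otimes> inv d"
    using assms(2-5) by (simp add: m_assoc)
  also have "\<dots> = b \<otimes> inv d"
    using assms by (simp flip: assms(1))
  finally show ?thesis ..
qed

locale top_2group =
  fixes \<Gamma> :: "('a, 'b) two_group"
  assumes topological_2group: "topological_2group \<Gamma>"
begin

abbreviation mult0 (infixl "\<cdot>" 70) where "x \<cdot> y \<equiv> x \<otimes>\<^bsub>G0 \<Gamma>\<^esub> y"
abbreviation mult1 (infixl "\<diamondop>" 70) where "g \<diamondop> h \<equiv> g \<otimes>\<^bsub>G1 \<Gamma>\<^esub> h"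
abbreviation "inv0 \<equiv> m_inv (G0 \<Gamma>)"
abbreviation "inv1 \<equiv> m_inv (G1 \<Gamma>)"
abbreviation "C0 \<equiv> carrier (G0 \<Gamma>)"
abbreviation "C1 \<equiv> carrier (G1 \<Gamma>)"
abbreviation "s \<equiv> src \<Gamma>"
abbreviation "t \<equiv> tgt \<Gamma>"
abbreviation "\<iota> \<equiv> idn \<Gamma>"
abbreviation "E \<equiv> kerE \<Gamma>"

lemma topological_group_objects: "topological_group (G0 \<Gamma>) (T0 \<Gamma>)"
  and topological_group_arrows: "topological_group (G1 \<Gamma>) (T1 \<Gamma>)"
  using topological_2group by (simp_all add: topological_2group_def)

sublocale obj: group "G0 \<Gamma>"
  using topological_group_objects by (simp add: topological_group_def)

sublocale arr: group "G1 \<Gamma>"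
  using topological_group_arrows by (simp add: topological_group_def)

sublocale src: group_hom "G1 \<Gamma>" "G0 \<Gamma>" s
  using topological_2group by unfold_locales (simp add: topological_2group_def)

sublocale tgt: group_hom "G1 \<Gamma>" "G0 \<Gamma>" t
  using topological_2group by unfold_locales (simp add: topological_2group_def)

sublocale idn: group_hom "G0 \<Gamma>" "G1 \<Gamma>" \<iota>
  using topological_2group by unfold_locales (simp add: topological_2group_def)

lemmas group_normalize = obj.m_assoc arr.m_assoc obj.inv_mult_group arr.inv_mult_group

lemma src_idn [simp]: "x \<in> C0 \<Longrightarrow> s (\<iota> x) = x"
  and tgt_idn [simp]: "x \<in> C0 \<Longrightarrow> t (\<iota> x) = x"
  using topological_2group by (auto simp: topological_2group_def)

lemma cmp_idn_left: "g \<in> C1 \<Longrightarrow> cmp \<Gamma> (\<iota> (s g)) g = g"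
  and cmp_idn_right: "g \<in> C1 \<Longrightarrow> cmp \<Gamma> g (\<iota> (t g)) = g"
  using topological_2group by (auto simp: topological_2group_def)

lemma cmp_interchange:
  assumes "g \<in> C1" "h \<in> C1" "t g = s h" "g' \<in> C1" "h' \<in> C1" "t g' = s h'"
  shows "cmp \<Gamma> (g \<diamondop> g') (h \<diamondop> h') = cmp \<Gamma> g h \<diamondop> cmp \<Gamma> g' h'"
proof -
  have "(g, h) \<in> comp_pairs \<Gamma>" "(g', h') \<in> comp_pairs \<Gamma>"
    using assms by (auto simp: comp_pairs_def)
  then show ?thesis
    using topological_2group unfolding topological_2group_def by fast
qed

text \<open>The interchange law forces composition to be expressible by the group law, in two ways.\<close>

lemma cmp_eq_mult:
  assumes g: "g \<in> C1" and h: "h \<in> C1" and gh: "t g = s h"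
  shows "cmp \<Gamma> g h = g \<diamondop> inv1 (\<iota> (t g)) \<diamondop> h"
proof -
  let ?g = "g \<diamondop> inv1 (\<iota> (t g))"
  have "cmp \<Gamma> (?g \<diamondop> \<iota> (t g)) (\<one>\<^bsub>G1 \<Gamma>\<^esub> \<diamondop> h) = cmp \<Gamma> ?g \<one>\<^bsub>G1 \<Gamma>\<^esub> \<diamondop> cmp \<Gamma> (\<iota> (t g)) h"
    by (rule cmp_interchange) (use g h gh in auto)
  moreover have "cmp \<Gamma> ?g \<one>\<^bsub>G1 \<Gamma>\<^esub> = ?g"
    using cmp_idn_right[of ?g] g by simp
  moreover have "cmp \<Gamma> (\<iota> (t g)) h = h"
    using cmp_idn_left[of h] gh h by simp
  ultimately show ?thesis
    using g h by (simp add: arr.m_assoc)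
qed

lemma cmp_eq_mult_swap:
  assumes g: "g \<in> C1" and h: "h \<in> C1" and gh: "t g = s h"
  shows "cmp \<Gamma> g h = h \<diamondop> inv1 (\<iota> (s h)) \<diamondop> g"
proof -
  let ?h = "h \<diamondop> inv1 (\<iota> (s h))"
  have "cmp \<Gamma> (\<one>\<^bsub>G1 \<Gamma>\<^esub> \<diamondop> g) (?h \<diamondop> \<iota> (t g)) = cmp \<Gamma> \<one>\<^bsub>G1 \<Gamma>\<^esub> ?h \<diamondop> cmp \<Gamma> g (\<iota> (t g))"
    by (rule cmp_interchange) (use g h gh in auto)
  moreover have "cmp \<Gamma> \<one>\<^bsub>G1 \<Gamma>\<^esub> ?h = ?h"
    using cmp_idn_left[of ?h] h by simp
  moreover have "cmp \<Gamma> g (\<iota> (t g)) = g"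
    using cmp_idn_right[of g] g by simp
  ultimately show ?thesis
    using g h gh by (simp add: arr.m_assoc)
qed

lemma kerE_iff: "f \<in> E \<longleftrightarrow> f \<in> C1 \<and> s f = \<one>\<^bsub>G0 \<Gamma>\<^esub>"
  by (simp add: kerE_def)

lemma kerE_closed: "f \<in> E \<Longrightarrow> f \<in> C1"
  and src_kerE [simp]: "f \<in> E \<Longrightarrow> s f = \<one>\<^bsub>G0 \<Gamma>\<^esub>"
  and kerE_mult: "f \<in> E \<Longrightarrow> f' \<in> E \<Longrightarrow> f \<diamondop> f' \<in> E"
  and kerE_inv: "f \<in> E \<Longrightarrow> inv1 f \<in> E"
  by (simp_all add: kerE_iff)

lemma peiffer_commute:
  assumes k: "k \<in> C1" "t k = \<one>\<^bsub>G0 \<Gamma>\<^esub>" and f: "f \<in> E"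
  shows "k \<diamondop> f = f \<diamondop> k"
proof -
  have f': "f \<in> C1" "s f = \<one>\<^bsub>G0 \<Gamma>\<^esub>"
    using f by (simp_all add: kerE_iff)
  have "cmp \<Gamma> k f = k \<diamondop> f"
    using cmp_eq_mult[of k f] k f' by simp
  moreover have "cmp \<Gamma> k f = f \<diamondop> k"
    using cmp_eq_mult_swap[of k f] k f' by simp
  ultimately show ?thesis
    by simp
qed

lemma conjact_eq: "x \<in> C0 \<Longrightarrow> f \<in> C1 \<Longrightarrow> conjact \<Gamma> x f = \<iota> x \<diamondop> (f \<diamondop> inv1 (\<iota> x))"
  by (simp add: conjact_def arr.m_assoc)

lemma conjact_closed [simp]: "x \<in> C0 \<Longrightarrow> f \<in> C1 \<Longrightarrow> conjact \<Gamma> x f \<in> C1"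
  by (simp add: conjact_eq)

lemma conjact_kerE: "x \<in> C0 \<Longrightarrow> f \<in> E \<Longrightarrow> conjact \<Gamma> x f \<in> E"
  by (simp add: conjact_eq kerE_iff)

lemma conjact_mult:
  "x \<in> C0 \<Longrightarrow> f \<in> C1 \<Longrightarrow> g \<in> C1 \<Longrightarrow> conjact \<Gamma> x (f \<diamondop> g) = conjact \<Gamma> x f \<diamondop> conjact \<Gamma> x g"
  by (simp add: conjact_eq group_normalize)

lemma conjact_inv: "x \<in> C0 \<Longrightarrow> f \<in> C1 \<Longrightarrow> conjact \<Gamma> x (inv1 f) = inv1 (conjact \<Gamma> x f)"
  by (simp add: conjact_eq group_normalize)

lemma conjact_conjact:
  "x \<in> C0 \<Longrightarrow> y \<in> C0 \<Longrightarrow> f \<in> C1 \<Longrightarrow> conjact \<Gamma> x (conjact \<Gamma> y f) = conjact \<Gamma> (x \<cdot> y) f"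
  by (simp add: conjact_eq group_normalize)

lemma mult_kerE_eq_conjact:
  assumes g: "g \<in> C1" and f: "f \<in> E"
  shows "g \<diamondop> f = conjact \<Gamma> (t g) f \<diamondop> g"
proof -
  let ?k = "inv1 (\<iota> (t g)) \<diamondop> g"
  have k: "?k \<in> C1" "t ?k = \<one>\<^bsub>G0 \<Gamma>\<^esub>"
    using g by auto
  have "g \<diamondop> f = \<iota> (t g) \<diamondop> (?k \<diamondop> f)"
    using g f by (simp add: kerE_closed group_normalize)
  also have "\<dots> = \<iota> (t g) \<diamondop> (f \<diamondop> ?k)"
    using peiffer_commute[OF k f] by simp
  finally show ?thesis
    using g f by (simp add: kerE_closed conjact_eq group_normalize)
qed

lemma topspace_T0: "topspace (T0 \<Gamma>) = C0"
  and topspace_T1: "topspace (T1 \<Gamma>) = C1"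
  using topological_group_objects topological_group_arrows by (simp_all add: topological_group_def)

lemma continuous_map_mult0 [continuous_intros]:
  "continuous_map Y (T0 \<Gamma>) f \<Longrightarrow> continuous_map Y (T0 \<Gamma>) g \<Longrightarrow> continuous_map Y (T0 \<Gamma>) (\<lambda>v. f v \<cdot> g v)"
  using continuous_map_compose[OF continuous_map_pairedI, of Y _ f _ g "T0 \<Gamma>" "\<lambda>p. fst p \<cdot> snd p"]
    topological_group_objects by (simp add: topological_group_def o_def)

lemma continuous_map_mult1 [continuous_intros]:
  "continuous_map Y (T1 \<Gamma>) f \<Longrightarrow> continuous_map Y (T1 \<Gamma>) g \<Longrightarrow> continuous_map Y (T1 \<Gamma>) (\<lambda>v. f v \<diamondop> g v)"
  using continuous_map_compose[OF continuous_map_pairedI, of Y _ f _ g "T1 \<Gamma>" "\<lambda>p. fst p \<diamondop> snd p"]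
    topological_group_arrows by (simp add: topological_group_def o_def)

lemma continuous_map_inv1 [continuous_intros]:
  "continuous_map Y (T1 \<Gamma>) f \<Longrightarrow> continuous_map Y (T1 \<Gamma>) (\<lambda>v. inv1 (f v))"
  using continuous_map_compose[of Y _ f "T1 \<Gamma>" inv1] topological_group_arrows
  by (simp add: topological_group_def o_def)

lemma continuous_map_idn [continuous_intros]:
  "continuous_map Y (T0 \<Gamma>) f \<Longrightarrow> continuous_map Y (T1 \<Gamma>) (\<lambda>v. \<iota> (f v))"
  using continuous_map_compose[of Y _ f "T1 \<Gamma>" \<iota>] topological_2group
  by (simp add: topological_2group_def o_def)

text \<open>x, e are values of a cocycle and a, d of a coboundary; the Peiffer identity absorbs the
  conjugated factor d_jk.\<close>

lemma cmp_coboundary_compatible: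
  assumes x: "x \<in> C0" and e: "e \<in> C1" and a: "a\<^sub>i \<in> C0" "a\<^sub>j \<in> C0"
    and d: "d\<^sub>i\<^sub>j \<in> E" "d\<^sub>j\<^sub>k \<in> E" "d\<^sub>i\<^sub>k \<in> E"
    and g: "g \<in> C1" and h: "h \<in> C1" "s h = inv0 x \<cdot> t g"
  shows "(\<iota> a\<^sub>i \<diamondop> d\<^sub>i\<^sub>k) \<diamondop> (e \<diamondop> cmp \<Gamma> g (\<iota> x \<diamondop> h))
    = conjact \<Gamma> a\<^sub>i (d\<^sub>i\<^sub>k \<diamondop> e \<diamondop> conjact \<Gamma> x (inv1 d\<^sub>j\<^sub>k) \<diamondop> inv1 d\<^sub>i\<^sub>j)
      \<diamondop> cmp \<Gamma> ((\<iota> a\<^sub>i \<diamondop> d\<^sub>i\<^sub>j) \<diamondop> g) (\<iota> (a\<^sub>i \<cdot> t d\<^sub>i\<^sub>j \<cdot> x \<cdot> inv0 a\<^sub>j) \<diamondop> ((\<iota> a\<^sub>j \<diamondop> d\<^sub>j\<^sub>k) \<diamondop> h))"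
proof -
  note [simp] = x e a g h d[THEN kerE_closed]
  let ?m = "inv1 (\<iota> x) \<diamondop> g \<diamondop> inv1 (\<iota> (t g)) \<diamondop> \<iota> x"
  have "?m \<diamondop> d\<^sub>j\<^sub>k = d\<^sub>j\<^sub>k \<diamondop> ?m"
    by (rule peiffer_commute) (simp_all add: d group_normalize)
  then have m_commute: "inv1 d\<^sub>j\<^sub>k \<diamondop> ?m \<diamondop> d\<^sub>j\<^sub>k = ?m"
    by (simp add: group_normalize)
  have "cmp \<Gamma> g (\<iota> x \<diamondop> h) = g \<diamondop> inv1 (\<iota> (t g)) \<diamondop> (\<iota> x \<diamondop> h)"
    by (rule cmp_eq_mult) (simp_all add: group_normalize)
  then have lhs: "(\<iota> a\<^sub>i \<diamondop> d\<^sub>i\<^sub>k) \<diamondop> (e \<diamondop> cmp \<Gamma> g (\<iota> x \<diamondop> h)) = \<iota> a\<^sub>i \<diamondop> d\<^sub>i\<^sub>k \<diamondop> e \<diamondop> \<iota> x \<diamondop> ?m \<diamondop> h"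
    by (simp add: group_normalize)
  have "cmp \<Gamma> ((\<iota> a\<^sub>i \<diamondop> d\<^sub>i\<^sub>j) \<diamondop> g) (\<iota> (a\<^sub>i \<cdot> t d\<^sub>i\<^sub>j \<cdot> x \<cdot> inv0 a\<^sub>j) \<diamondop> ((\<iota> a\<^sub>j \<diamondop> d\<^sub>j\<^sub>k) \<diamondop> h))
      = ((\<iota> a\<^sub>i \<diamondop> d\<^sub>i\<^sub>j) \<diamondop> g) \<diamondop> inv1 (\<iota> (t ((\<iota> a\<^sub>i \<diamondop> d\<^sub>i\<^sub>j) \<diamondop> g)))
        \<diamondop> (\<iota> (a\<^sub>i \<cdot> t d\<^sub>i\<^sub>j \<cdot> x \<cdot> inv0 a\<^sub>j) \<diamondop> ((\<iota> a\<^sub>j \<diamondop> d\<^sub>j\<^sub>k) \<diamondop> h))"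
    by (rule cmp_eq_mult) (simp_all add: d group_normalize)
  then have rhs: "conjact \<Gamma> a\<^sub>i (d\<^sub>i\<^sub>k \<diamondop> e \<diamondop> conjact \<Gamma> x (inv1 d\<^sub>j\<^sub>k) \<diamondop> inv1 d\<^sub>i\<^sub>j)
      \<diamondop> cmp \<Gamma> ((\<iota> a\<^sub>i \<diamondop> d\<^sub>i\<^sub>j) \<diamondop> g) (\<iota> (a\<^sub>i \<cdot> t d\<^sub>i\<^sub>j \<cdot> x \<cdot> inv0 a\<^sub>j) \<diamondop> ((\<iota> a\<^sub>j \<diamondop> d\<^sub>j\<^sub>k) \<diamondop> h))
      = \<iota> a\<^sub>i \<diamondop> d\<^sub>i\<^sub>k \<diamondop> e \<diamondop> \<iota> x \<diamondop> (inv1 d\<^sub>j\<^sub>k \<diamondop> ?m \<diamondop> d\<^sub>j\<^sub>k) \<diamondop> h"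
    by (simp add: conjact_eq group_normalize)
  show ?thesis
    unfolding lhs rhs m_commute ..
qed

end

locale pointwise_cocycle = top_2group +
  fixes J :: "'i set" and x :: "'i \<Rightarrow> 'i \<Rightarrow> 'a" and e :: "'i \<Rightarrow> 'i \<Rightarrow> 'i \<Rightarrow> 'b"
  assumes x_closed [simp]: "i \<in> J \<Longrightarrow> j \<in> J \<Longrightarrow> x i j \<in> C0"
    and e_kerE: "i \<in> J \<Longrightarrow> j \<in> J \<Longrightarrow> k \<in> J \<Longrightarrow> e i j k \<in> E"
    and tgt_e: "i \<in> J \<Longrightarrow> j \<in> J \<Longrightarrow> k \<in> J \<Longrightarrow> t (e i j k) \<cdot> x i j \<cdot> x j k = x i k"
    and pentagon: "i \<in> J \<Longrightarrow> j \<in> J \<Longrightarrow> k \<in> J \<Longrightarrow> l \<in> J \<Longrightarrow>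
      e i k l \<diamondop> e i j k = e i j l \<diamondop> conjact \<Gamma> (x i j) (e j k l)"
begin

lemma e_closed [simp]: "i \<in> J \<Longrightarrow> j \<in> J \<Longrightarrow> k \<in> J \<Longrightarrow> e i j k \<in> C1"
  using e_kerE kerE_closed by blast

text \<open>The 2-cell comparing the transition of the charts i, j with that of the charts K, L,
  when i is moved to K and j to L.\<close>

definition reindex_cell :: "'i \<Rightarrow> 'i \<Rightarrow> 'i \<Rightarrow> 'i \<Rightarrow> 'b" where
  "reindex_cell i j K L = inv1 (e i j L) \<diamondop> e i K L"

lemma reindex_cell_kerE: "i \<in> J \<Longrightarrow> j \<in> J \<Longrightarrow> K \<in> J \<Longrightarrow> L \<in> J \<Longrightarrow> reindex_cell i j K L \<in> E"
  by (simp add: reindex_cell_def e_kerE kerE_mult kerE_inv)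

lemma reindex_cell_closed [simp]:
  "i \<in> J \<Longrightarrow> j \<in> J \<Longrightarrow> K \<in> J \<Longrightarrow> L \<in> J \<Longrightarrow> reindex_cell i j K L \<in> C1"
  using reindex_cell_kerE kerE_closed by blast

lemma tgt_reindex_cell:
  assumes "i \<in> J" "j \<in> J" "K \<in> J" "L \<in> J"
  shows "t (reindex_cell i j K L) \<cdot> (x i K \<cdot> x K L \<cdot> inv0 (x j L)) = x i j"
proof -
  have tgt: "t (e i K L) \<cdot> x i K \<cdot> x K L = t (e i j L) \<cdot> x i j \<cdot> x j L"
    using tgt_e assms by simp
  have "t (reindex_cell i j K L) \<cdot> (x i K \<cdot> x K L \<cdot> inv0 (x j L))
      = inv0 (t (e i j L)) \<cdot> (t (e i K L) \<cdot> x i K \<cdot> x K L) \<cdot> inv0 (x j L)"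
    using assms by (simp add: reindex_cell_def group_normalize)
  also have "\<dots> = inv0 (t (e i j L)) \<cdot> (t (e i j L) \<cdot> x i j \<cdot> x j L) \<cdot> inv0 (x j L)"
    by (simp only: tgt)
  also have "\<dots> = x i j"
    using assms by (simp add: group_normalize)
  finally show ?thesis .
qed

lemma reindex_coherence:
  assumes J: "i \<in> J" "j \<in> J" "k \<in> J" "K \<in> J" "L \<in> J" "M \<in> J"
  shows "e i j k \<diamondop> reindex_cell i j K L \<diamondop> conjact \<Gamma> (x i K \<cdot> x K L \<cdot> inv0 (x j L)) (reindex_cell j k L M)
    = reindex_cell i k K M \<diamondop> conjact \<Gamma> (x i K) (e K L M)"
proof -
  let ?A = "conjact \<Gamma> (x i j) (e j k M)" and ?B = "conjact \<Gamma> (x i j) (e j L M)"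
    and ?C = "conjact \<Gamma> (x i K) (e K L M)"
  note [simp] = J
  have A: "e i j k \<diamondop> inv1 ?A = inv1 (e i k M) \<diamondop> e i j M"
    by (rule arr.mult_eq_mult_solve) (simp_all add: pentagon)
  have B: "?B \<diamondop> inv1 (e i j L) = inv1 (e i j M) \<diamondop> e i L M"
    by (rule arr.mult_eq_mult_solve) (simp_all add: pentagon)
  have C: "e i K L = inv1 (e i L M) \<diamondop> e i K M \<diamondop> ?C"
    using pentagon[of i K L M] by (simp add: group_normalize flip: pentagon[of i K L M])
  have "reindex_cell i j K L \<diamondop> conjact \<Gamma> (x i K \<cdot> x K L \<cdot> inv0 (x j L)) (reindex_cell j k L M)
      = conjact \<Gamma> (t (reindex_cell i j K L) \<cdot> (x i K \<cdot> x K L \<cdot> inv0 (x j L))) (reindex_cell j k L M)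
        \<diamondop> reindex_cell i j K L"
    by (simp add: mult_kerE_eq_conjact conjact_kerE reindex_cell_kerE conjact_conjact)
  also have "\<dots> = conjact \<Gamma> (x i j) (reindex_cell j k L M) \<diamondop> reindex_cell i j K L"
    by (simp only: tgt_reindex_cell[OF J(1,2,4,5)])
  also have "\<dots> = (inv1 ?A \<diamondop> ?B) \<diamondop> (inv1 (e i j L) \<diamondop> e i K L)"
    by (simp add: reindex_cell_def conjact_mult conjact_inv)
  finally have "e i j k \<diamondop> reindex_cell i j K L \<diamondop> conjact \<Gamma> (x i K \<cdot> x K L \<cdot> inv0 (x j L)) (reindex_cell j k L M)
      = (e i j k \<diamondop> inv1 ?A) \<diamondop> (?B \<diamondop> inv1 (e i j L)) \<diamondop> e i K L"
    by (simp add: group_normalize)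
  also have "\<dots> = reindex_cell i k K M \<diamondop> ?C"
    by (simp add: A B C reindex_cell_def group_normalize)
  finally show ?thesis .
qed

lemma reindex_transport:
  assumes J: "i \<in> J" "j \<in> J" "k \<in> J" "K \<in> J" "L \<in> J" "M \<in> J"
    and N: "N1 \<in> C1" "N2 \<in> C1" "N3 \<in> C1" "Z \<in> C1" "t N1 = x K L"
    and rel: "e K L M \<diamondop> N1 \<diamondop> N2 = N3 \<diamondop> Z"
  shows "e i j k \<diamondop> (reindex_cell i j K L \<diamondop> \<iota> (x i K) \<diamondop> N1 \<diamondop> inv1 (\<iota> (x j L)))
      \<diamondop> (reindex_cell j k L M \<diamondop> \<iota> (x j L) \<diamondop> N2 \<diamondop> inv1 (\<iota> (x k M)))
    = reindex_cell i k K M \<diamondop> \<iota> (x i K) \<diamondop> N3 \<diamondop> Z \<diamondop> inv1 (\<iota> (x k M))"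
proof -
  note [simp] = J N
  define Q where "Q = conjact \<Gamma> (inv0 (x j L)) (reindex_cell j k L M)"
  have Q: "Q \<in> E"
    by (simp add: Q_def conjact_kerE reindex_cell_kerE)
  have Q_eq: "Q = inv1 (\<iota> (x j L)) \<diamondop> (reindex_cell j k L M \<diamondop> \<iota> (x j L))"
    by (simp add: Q_def conjact_eq)
  have "e i j k \<diamondop> (reindex_cell i j K L \<diamondop> \<iota> (x i K) \<diamondop> N1 \<diamondop> inv1 (\<iota> (x j L)))
      \<diamondop> (reindex_cell j k L M \<diamondop> \<iota> (x j L) \<diamondop> N2 \<diamondop> inv1 (\<iota> (x k M)))
    = e i j k \<diamondop> reindex_cell i j K L \<diamondop> \<iota> (x i K) \<diamondop> (N1 \<diamondop> Q) \<diamondop> N2 \<diamondop> inv1 (\<iota> (x k M))"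
    by (simp add: Q_eq group_normalize)
  also have "\<dots> = e i j k \<diamondop> reindex_cell i j K L \<diamondop> (\<iota> (x i K) \<diamondop> conjact \<Gamma> (x K L) Q) \<diamondop> N1 \<diamondop> N2
      \<diamondop> inv1 (\<iota> (x k M))"
    using Q by (simp add: mult_kerE_eq_conjact kerE_closed group_normalize)
  also have "\<dots> = (e i j k \<diamondop> reindex_cell i j K L \<diamondop> conjact \<Gamma> (x i K \<cdot> x K L \<cdot> inv0 (x j L)) (reindex_cell j k L M))
      \<diamondop> \<iota> (x i K) \<diamondop> N1 \<diamondop> N2 \<diamondop> inv1 (\<iota> (x k M))"
    by (simp add: Q_def conjact_eq group_normalize)
  also have "\<dots> = reindex_cell i k K M \<diamondop> conjact \<Gamma> (x i K) (e K L M) \<diamondop> \<iota> (x i K) \<diamondop> N1 \<diamondop> N2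
      \<diamondop> inv1 (\<iota> (x k M))"
    by (simp only: reindex_coherence[OF J])
  also have "\<dots> = reindex_cell i k K M \<diamondop> \<iota> (x i K) \<diamondop> (e K L M \<diamondop> N1 \<diamondop> N2) \<diamondop> inv1 (\<iota> (x k M))"
    by (simp add: conjact_eq group_normalize)
  also have "\<dots> = reindex_cell i k K M \<diamondop> \<iota> (x i K) \<diamondop> N3 \<diamondop> Z \<diamondop> inv1 (\<iota> (x k M))"
    by (simp add: rel group_normalize)
  finally show ?thesis .
qed

end

section \<open>From cohomologies to bundle morphisms\<close>

locale cover_2group = top_2group +
  fixes X :: "'x topology" and I :: "'i set" and U :: "'i \<Rightarrow> 'x set"
  assumes open_cover: "open_cover X I U"
begin

lemma chart_subset_topspace: "i \<in> I \<Longrightarrow> U i \<subseteq> topspace X"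
  using open_cover by (auto simp: open_cover_def dest: openin_subset)

lemma cech_cocycle_pointwise:
  assumes c: "cech_cocycle \<Gamma> X I U c"
  shows "pointwise_cocycle \<Gamma> {i \<in> I. v \<in> U i} (\<lambda>i j. fst c i j v) (\<lambda>i j k. snd c i j k v)"
proof (intro pointwise_cocycle.intro pointwise_cocycle_axioms.intro top_2group_axioms)
  fix i j k l assume J: "i \<in> {i \<in> I. v \<in> U i}" "j \<in> {i \<in> I. v \<in> U i}" "k \<in> {i \<in> I. v \<in> U i}"
    "l \<in> {i \<in> I. v \<in> U i}"
  then have v: "v \<in> topspace X"
    using chart_subset_topspace by blast
  have "continuous_map (subtopology X (U i \<inter> U j)) (T0 \<Gamma>) (fst c i j)"
    using c J by (simp add: cech_cocycle_def)
  then show "fst c i j v \<in> C0"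
    using J v by (auto simp: continuous_map_def topspace_T0)
  have "continuous_map (subtopology X (U i \<inter> U j \<inter> U k)) (subtopology (T1 \<Gamma>) E) (snd c i j k)"
    using c J by (simp add: cech_cocycle_def)
  then show "snd c i j k v \<in> E"
    using J v by (auto simp: continuous_map_def)
  show "t (snd c i j k v) \<cdot> fst c i j v \<cdot> fst c j k v = fst c i k v"
    using c J by (simp add: cech_cocycle_def)
  show "snd c i k l v \<diamondop> snd c i j k v = snd c i j l v \<diamondop> conjact \<Gamma> (fst c i j v) (snd c j k l v)"
    using c J by (simp add: cech_cocycle_def)
qed

lemma topspace_P0_top: "topspace (P0_top \<Gamma> X I U) = (SIGMA i:I. U i \<times> C0)"
  using chart_subset_topspace by (fastforce simp: P0_top_def topspace_T0)

lemma topspace_P1_top: "topspace (P1_top \<Gamma> X I U) = (SIGMA (i, j):I \<times> I. (U i \<inter> U j) \<times> C1)"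
  using chart_subset_topspace by (fastforce simp: P1_top_def topspace_T1)

lemma P1_top_eq:
  "P1_top \<Gamma> X I U = sum_topology (\<lambda>ij. prod_topology (subtopology X (U (fst ij) \<inter> U (snd ij))) (T1 \<Gamma>)) (I \<times> I)"
  by (simp add: P1_top_def case_prod_beta')

lemma continuous_map_fiber_mult0:
  "(\<And>i. i \<in> I \<Longrightarrow> continuous_map (subtopology X (U i)) (T0 \<Gamma>) (a i))
    \<Longrightarrow> continuous_map (P0_top \<Gamma> X I U) (P0_top \<Gamma> X I U) (fiber_mult (\<otimes>\<^bsub>G0 \<Gamma>\<^esub>) a)"
  unfolding P0_top_def
  using topological_group_objects by (intro continuous_map_fiber_mult) (simp_all add: topological_group_def)

lemma continuous_map_fiber_mult1:
  "(\<And>i j. i \<in> I \<Longrightarrow> j \<in> I \<Longrightarrow> continuous_map (subtopology X (U i \<inter> U j)) (T1 \<Gamma>) (b (i, j)))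
    \<Longrightarrow> continuous_map (P1_top \<Gamma> X I U) (P1_top \<Gamma> X I U) (fiber_mult (\<otimes>\<^bsub>G1 \<Gamma>\<^esub>) b)"
  unfolding P1_top_eq
  using topological_group_arrows by (intro continuous_map_fiber_mult) (auto simp: topological_group_def)

lemma continuous_map_cocycle_fst:
  assumes "cech_cocycle \<Gamma> X I U cz" "i \<in> I" "j \<in> I" "S \<subseteq> U i \<inter> U j"
  shows "continuous_map (subtopology X S) (T0 \<Gamma>) (fst cz i j)"
proof -
  have "continuous_map (subtopology X (U i \<inter> U j)) (T0 \<Gamma>) (fst cz i j)"
    using assms(1-3) by (simp add: cech_cocycle_def)
  then show ?thesis
    using assms(4) by (rule continuous_map_from_subtopology_mono)
qed

lemma continuous_map_cocycle_snd:
  assumes "cech_cocycle \<Gamma> X I U cz" "i \<in> I" "j \<in> I" "k \<in> I" "S \<subseteq> U i \<inter> U j \<inter> U k"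
  shows "continuous_map (subtopology X S) (T1 \<Gamma>) (snd cz i j k)"
proof -
  have "continuous_map (subtopology X (U i \<inter> U j \<inter> U k)) (subtopology (T1 \<Gamma>) E) (snd cz i j k)"
    using assms(1-4) by (simp add: cech_cocycle_def)
  then show ?thesis
    using assms(5) by (metis continuous_map_into_fulltopology continuous_map_from_subtopology_mono)
qed

lemma bundle_morphism_fiber_mult:
  assumes c: "cech_cocycle \<Gamma> X I U c"
    and a: "\<And>i. i \<in> I \<Longrightarrow> continuous_map (subtopology X (U i)) (T0 \<Gamma>) (a i)"
    and d: "\<And>i j. i \<in> I \<Longrightarrow> j \<in> I \<Longrightarrow>
      continuous_map (subtopology X (U i \<inter> U j)) (subtopology (T1 \<Gamma>) E) (d i j)"
    and x': "\<And>i j v. i \<in> I \<Longrightarrow> j \<in> I \<Longrightarrow> v \<in> U i \<inter> U j \<Longrightarrow>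
      fst c' i j v = a i v \<cdot> t (d i j v) \<cdot> fst c i j v \<cdot> inv0 (a j v)"
    and e': "\<And>i j k v. i \<in> I \<Longrightarrow> j \<in> I \<Longrightarrow> k \<in> I \<Longrightarrow> v \<in> U i \<inter> U j \<inter> U k \<Longrightarrow>
      snd c' i j k v = conjact \<Gamma> (a i v)
        (d i k v \<diamondop> snd c i j k v \<diamondop> conjact \<Gamma> (fst c i j v) (inv1 (d j k v)) \<diamondop> inv1 (d i j v))"
  shows "bundle_morphism \<Gamma> X I U c c' (fiber_mult (\<otimes>\<^bsub>G0 \<Gamma>\<^esub>) a)
    (fiber_mult (\<otimes>\<^bsub>G1 \<Gamma>\<^esub>) (\<lambda>(i, j) v. \<iota> (a i v) \<diamondop> d i j v))"
proof -
  have a_closed [simp]: "a i v \<in> C0" if "i \<in> I" "v \<in> U i" for i v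
    using a[OF that(1)] that chart_subset_topspace by (auto simp: continuous_map_def topspace_T0)
  have d_kerE [simp]: "d i j v \<in> E" if "i \<in> I" "j \<in> I" "v \<in> U i" "v \<in> U j" for i j v
    using d[OF that(1,2)] that chart_subset_topspace by (auto simp: continuous_map_def)
  define b where "b = (\<lambda>(i, j) v. \<iota> (a i v) \<diamondop> d i j v)"
  then have b_eq: "(\<lambda>(i, j) v. \<iota> (a i v) \<diamondop> d i j v) = b"
    by simp
  have b: "continuous_map (subtopology X (U i \<inter> U j)) (T1 \<Gamma>) (b (i, j))" if "i \<in> I" "j \<in> I" for i j
    using continuous_map_from_subtopology_mono[OF a[OF that(1)], of "U i \<inter> U j"]
      continuous_map_into_fulltopology[OF d[OF that]]
    by (auto simp: b_def intro!: continuous_intros)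
  show ?thesis
    unfolding bundle_morphism_def b_eq
  proof (intro conjI ballI impI)
    show "continuous_map (P0_top \<Gamma> X I U) (P0_top \<Gamma> X I U) (fiber_mult (\<otimes>\<^bsub>G0 \<Gamma>\<^esub>) a)"
      using a by (rule continuous_map_fiber_mult0)
    show "continuous_map (P1_top \<Gamma> X I U) (P1_top \<Gamma> X I U) (fiber_mult (\<otimes>\<^bsub>G1 \<Gamma>\<^esub>) b)"
      using b by (rule continuous_map_fiber_mult1)
  next
    fix q assume "q \<in> topspace (P1_top \<Gamma> X I U)"
    then obtain i j v g where q: "q = ((i, j), v, g)" "i \<in> I" "j \<in> I" "v \<in> U i" "v \<in> U j" "g \<in> C1"
      by (auto simp: topspace_P1_top)
    interpret c: pointwise_cocycle \<Gamma> "{i \<in> I. v \<in> U i}" "\<lambda>i j. fst c i j v" "\<lambda>i j k. snd c i j k v"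
      using c by (rule cech_cocycle_pointwise)
    show "P_src \<Gamma> c' (fiber_mult (\<otimes>\<^bsub>G1 \<Gamma>\<^esub>) b q) = fiber_mult (\<otimes>\<^bsub>G0 \<Gamma>\<^esub>) a (P_src \<Gamma> c q)"
      using q by (simp add: P_src_def b_def kerE_closed)
    show "P_tgt \<Gamma> c' (fiber_mult (\<otimes>\<^bsub>G1 \<Gamma>\<^esub>) b q) = fiber_mult (\<otimes>\<^bsub>G0 \<Gamma>\<^esub>) a (P_tgt \<Gamma> c q)"
      using q by (simp add: P_tgt_def b_def x' kerE_closed group_normalize)
  next
    fix p q assume "p \<in> topspace (P1_top \<Gamma> X I U)" "q \<in> topspace (P1_top \<Gamma> X I U)"
      and pq: "P_tgt \<Gamma> c p = P_src \<Gamma> c q"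
    then obtain i j k v g h where p: "p = ((i, j), v, g)" and q: "q = ((j, k), v, h)"
      and J: "i \<in> I" "j \<in> I" "k \<in> I" "v \<in> U i" "v \<in> U j" "v \<in> U k"
      and gh: "g \<in> C1" "h \<in> C1" "s h = inv0 (fst c i j v) \<cdot> t g"
      by (auto simp: topspace_P1_top P_tgt_def P_src_def)
    interpret c: pointwise_cocycle \<Gamma> "{i \<in> I. v \<in> U i}" "\<lambda>i j. fst c i j v" "\<lambda>i j k. snd c i j k v"
      using c by (rule cech_cocycle_pointwise)
    show "fiber_mult (\<otimes>\<^bsub>G1 \<Gamma>\<^esub>) b (P_cmp \<Gamma> c p q)
      = P_cmp \<Gamma> c' (fiber_mult (\<otimes>\<^bsub>G1 \<Gamma>\<^esub>) b p) (fiber_mult (\<otimes>\<^bsub>G1 \<Gamma>\<^esub>) b q)"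
      using cmp_coboundary_compatible[of "fst c i j v" "snd c i j k v" "a i v" "a j v" "d i j v" "d j k v"
          "d i k v" g h] J gh
      by (simp add: p q P_cmp_def b_def x' e' c.e_kerE kerE_closed)
  next
    fix p y assume "p \<in> topspace (P0_top \<Gamma> X I U)" "y \<in> C0"
    then show "fiber_mult (\<otimes>\<^bsub>G0 \<Gamma>\<^esub>) a (P0_act \<Gamma> p y) = P0_act \<Gamma> (fiber_mult (\<otimes>\<^bsub>G0 \<Gamma>\<^esub>) a p) y"
      by (auto simp: topspace_P0_top P0_act_def obj.m_assoc)
  next
    fix q h assume "q \<in> topspace (P1_top \<Gamma> X I U)" "h \<in> C1"
    then show "fiber_mult (\<otimes>\<^bsub>G1 \<Gamma>\<^esub>) b (P1_act \<Gamma> q h) = P1_act \<Gamma> (fiber_mult (\<otimes>\<^bsub>G1 \<Gamma>\<^esub>) b q) h"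
      by (auto simp: topspace_P1_top P1_act_def b_def kerE_closed arr.m_assoc)
  qed (auto simp: fiber_mult_def P0_proj_def P1_proj_def split: prod.split)
qed

lemma bundle_morphism_if_cohomologous:
  assumes c: "cech_cocycle \<Gamma> X I U c" and coh: "cohomologous \<Gamma> X I U c c'"
  shows "\<exists>f0 f1. bundle_morphism \<Gamma> X I U c c' f0 f1"
proof -
  obtain a d where
    "\<forall>i \<in> I. continuous_map (subtopology X (U i)) (T0 \<Gamma>) (a i)"
    "\<forall>i \<in> I. \<forall>j \<in> I. continuous_map (subtopology X (U i \<inter> U j)) (subtopology (T1 \<Gamma>) E) (d i j)"
    "\<forall>i \<in> I. \<forall>j \<in> I. \<forall>v \<in> U i \<inter> U j.
      fst c' i j v = a i v \<cdot> t (d i j v) \<cdot> fst c i j v \<cdot> inv0 (a j v)"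
    "\<forall>i \<in> I. \<forall>j \<in> I. \<forall>k \<in> I. \<forall>v \<in> U i \<inter> U j \<inter> U k.
      snd c' i j k v = conjact \<Gamma> (a i v)
        (d i k v \<diamondop> snd c i j k v \<diamondop> conjact \<Gamma> (fst c i j v) (inv1 (d j k v)) \<diamondop> inv1 (d i j v))"
    using coh unfolding cohomologous_def by blast
  then have "bundle_morphism \<Gamma> X I U c c' (fiber_mult (\<otimes>\<^bsub>G0 \<Gamma>\<^esub>) a)
    (fiber_mult (\<otimes>\<^bsub>G1 \<Gamma>\<^esub>) (\<lambda>(i, j) v. \<iota> (a i v) \<diamondop> d i j v))"
    by (intro bundle_morphism_fiber_mult[OF c]) simp_all
  then show ?thesis
    by blast
qed

end

section \<open>From bundle morphisms to cohomologies\<close>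

locale cech_bundle_morphism = cover_2group +
  fixes c c' :: "('i \<Rightarrow> 'i \<Rightarrow> 'x \<Rightarrow> 'a) \<times> ('i \<Rightarrow> 'i \<Rightarrow> 'i \<Rightarrow> 'x \<Rightarrow> 'b)"
    and f0 :: "'i \<times> 'x \<times> 'a \<Rightarrow> 'i \<times> 'x \<times> 'a"
    and f1 :: "('i \<times> 'i) \<times> 'x \<times> 'b \<Rightarrow> ('i \<times> 'i) \<times> 'x \<times> 'b"
  assumes cocycle: "cech_cocycle \<Gamma> X I U c"
    and cocycle': "cech_cocycle \<Gamma> X I U c'"
    and morphism: "bundle_morphism \<Gamma> X I U c c' f0 f1"
begin

lemma f0_continuous: "continuous_map (P0_top \<Gamma> X I U) (P0_top \<Gamma> X I U) f0"
  and f1_continuous: "continuous_map (P1_top \<Gamma> X I U) (P1_top \<Gamma> X I U) f1"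
  and f1_src: "\<And>q. q \<in> topspace (P1_top \<Gamma> X I U) \<Longrightarrow> P_src \<Gamma> c' (f1 q) = f0 (P_src \<Gamma> c q)"
  and f1_tgt: "\<And>q. q \<in> topspace (P1_top \<Gamma> X I U) \<Longrightarrow> P_tgt \<Gamma> c' (f1 q) = f0 (P_tgt \<Gamma> c q)"
  and f1_cmp: "\<And>p q. p \<in> topspace (P1_top \<Gamma> X I U) \<Longrightarrow> q \<in> topspace (P1_top \<Gamma> X I U) \<Longrightarrow>
        P_tgt \<Gamma> c p = P_src \<Gamma> c q \<Longrightarrow> f1 (P_cmp \<Gamma> c p q) = P_cmp \<Gamma> c' (f1 p) (f1 q)"
  and f0_act: "\<And>p y. p \<in> topspace (P0_top \<Gamma> X I U) \<Longrightarrow> y \<in> C0 \<Longrightarrow> f0 (P0_act \<Gamma> p y) = P0_act \<Gamma> (f0 p) y"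
  and f1_act: "\<And>q g. q \<in> topspace (P1_top \<Gamma> X I U) \<Longrightarrow> g \<in> C1 \<Longrightarrow> f1 (P1_act \<Gamma> q g) = P1_act \<Gamma> (f1 q) g"
  and f0_proj: "\<And>p. p \<in> topspace (P0_top \<Gamma> X I U) \<Longrightarrow> P0_proj (f0 p) = P0_proj p"
  and f1_proj: "\<And>q. q \<in> topspace (P1_top \<Gamma> X I U) \<Longrightarrow> P1_proj (f1 q) = P1_proj q"
  using morphism unfolding bundle_morphism_def by blast+

lemma c_at_point: "pointwise_cocycle \<Gamma> {i \<in> I. v \<in> U i} (\<lambda>i j. fst c i j v) (\<lambda>i j k. snd c i j k v)"
  and c'_at_point: "pointwise_cocycle \<Gamma> {i \<in> I. v \<in> U i} (\<lambda>i j. fst c' i j v) (\<lambda>i j k. snd c' i j k v)"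
  using cocycle cocycle' by (simp_all add: cech_cocycle_pointwise)

text \<open>A bundle morphism may move a point of the chart i to another chart containing it, so f0 is
  described by the chart it moves the unit section to and by an offset in G0; likewise for f1.\<close>

definition image_chart :: "'i \<Rightarrow> 'x \<Rightarrow> 'i" where
  "image_chart i v = fst (f0 (i, v, \<one>\<^bsub>G0 \<Gamma>\<^esub>))"

definition offset0 :: "'i \<Rightarrow> 'x \<Rightarrow> 'a" where
  "offset0 i v = snd (snd (f0 (i, v, \<one>\<^bsub>G0 \<Gamma>\<^esub>)))"

definition offset1 :: "'i \<Rightarrow> 'i \<Rightarrow> 'x \<Rightarrow> 'b" where
  "offset1 i j v = snd (snd (f1 ((i, j), v, \<one>\<^bsub>G1 \<Gamma>\<^esub>)))"

lemma f0_unit: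
  assumes "i \<in> I" "v \<in> U i"
  shows "f0 (i, v, \<one>\<^bsub>G0 \<Gamma>\<^esub>) = (image_chart i v, v, offset0 i v)"
    and image_chart_mem [simp]: "image_chart i v \<in> I" "v \<in> U (image_chart i v)"
    and offset0_closed [simp]: "offset0 i v \<in> C0"
proof -
  have p: "(i, v, \<one>\<^bsub>G0 \<Gamma>\<^esub>) \<in> topspace (P0_top \<Gamma> X I U)"
    using assms by (simp add: topspace_P0_top)
  then have "f0 (i, v, \<one>\<^bsub>G0 \<Gamma>\<^esub>) \<in> topspace (P0_top \<Gamma> X I U)"
    using continuous_map_image_subset_topspace[OF f0_continuous] by blast
  moreover have "P0_proj (f0 (i, v, \<one>\<^bsub>G0 \<Gamma>\<^esub>)) = v"
    using f0_proj[OF p] by (simp add: P0_proj_def)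
  ultimately show "f0 (i, v, \<one>\<^bsub>G0 \<Gamma>\<^esub>) = (image_chart i v, v, offset0 i v)"
    "image_chart i v \<in> I" "v \<in> U (image_chart i v)" "offset0 i v \<in> C0"
    by (auto simp: image_chart_def offset0_def topspace_P0_top P0_proj_def)
qed

lemma f0_eq:
  assumes "i \<in> I" "v \<in> U i" "g \<in> C0"
  shows "f0 (i, v, g) = (image_chart i v, v, offset0 i v \<cdot> g)"
proof -
  have "f0 (P0_act \<Gamma> (i, v, \<one>\<^bsub>G0 \<Gamma>\<^esub>) g) = P0_act \<Gamma> (f0 (i, v, \<one>\<^bsub>G0 \<Gamma>\<^esub>)) g"
    using assms by (intro f0_act) (simp_all add: topspace_P0_top)
  then show ?thesis
    using assms by (simp add: f0_unit P0_act_def)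
qed

lemma f1_unit:
  assumes ij: "i \<in> I" "j \<in> I" "v \<in> U i" "v \<in> U j"
  shows "f1 ((i, j), v, \<one>\<^bsub>G1 \<Gamma>\<^esub>) = ((image_chart i v, image_chart j v), v, offset1 i j v)"
    and offset1_closed [simp]: "offset1 i j v \<in> C1"
    and src_offset1: "s (offset1 i j v) = offset0 i v"
    and tgt_offset1: "t (offset1 i j v)
      = fst c' (image_chart i v) (image_chart j v) v \<cdot> offset0 j v \<cdot> inv0 (fst c i j v)"
proof -
  interpret c: pointwise_cocycle \<Gamma> "{i \<in> I. v \<in> U i}" "\<lambda>i j. fst c i j v" "\<lambda>i j k. snd c i j k v"
    by (rule c_at_point)
  interpret c': pointwise_cocycle \<Gamma> "{i \<in> I. v \<in> U i}" "\<lambda>i j. fst c' i j v" "\<lambda>i j k. snd c' i j k v"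
    by (rule c'_at_point)
  have q: "((i, j), v, \<one>\<^bsub>G1 \<Gamma>\<^esub>) \<in> topspace (P1_top \<Gamma> X I U)"
    using ij by (simp add: topspace_P1_top)
  then have "f1 ((i, j), v, \<one>\<^bsub>G1 \<Gamma>\<^esub>) \<in> topspace (P1_top \<Gamma> X I U)"
    using continuous_map_image_subset_topspace[OF f1_continuous] by blast
  then obtain k l w g where f1q: "f1 ((i, j), v, \<one>\<^bsub>G1 \<Gamma>\<^esub>) = ((k, l), w, g)"
    and kl: "k \<in> I" "l \<in> I" "w \<in> U k" "w \<in> U l" and g: "g \<in> C1"
    by (auto simp: topspace_P1_top)
  have w: "w = v"
    using f1_proj[OF q] f1q by (simp add: P1_proj_def)
  have "(k, v, s g) = (image_chart i v, v, offset0 i v)"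
    using f1_src[OF q] f1q w ij by (simp add: P_src_def f0_unit)
  then have k: "k = image_chart i v" and src: "s g = offset0 i v"
    by simp_all
  have "(l, v, inv0 (fst c' k l v) \<cdot> t g) = (image_chart j v, v, offset0 j v \<cdot> inv0 (fst c i j v))"
    using f1_tgt[OF q] f1q w ij by (auto simp: P_tgt_def f0_eq)
  then have l: "l = image_chart j v" and tgt: "inv0 (fst c' k l v) \<cdot> t g = offset0 j v \<cdot> inv0 (fst c i j v)"
    by auto
  have g_eq: "offset1 i j v = g"
    using f1q by (simp add: offset1_def)
  show "f1 ((i, j), v, \<one>\<^bsub>G1 \<Gamma>\<^esub>) = ((image_chart i v, image_chart j v), v, offset1 i j v)"
    using f1q w k l g_eq by simp
  show "offset1 i j v \<in> C1" "s (offset1 i j v) = offset0 i v"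
    using g g_eq src by simp_all
  have "t g = fst c' k l v \<cdot> (inv0 (fst c' k l v) \<cdot> t g)"
    using kl w g by simp
  then show "t (offset1 i j v) = fst c' (image_chart i v) (image_chart j v) v \<cdot> offset0 j v \<cdot> inv0 (fst c i j v)"
    using tgt g_eq k l ij by (simp add: obj.m_assoc)
qed

lemma f1_eq:
  assumes "i \<in> I" "j \<in> I" "v \<in> U i" "v \<in> U j" "g \<in> C1"
  shows "f1 ((i, j), v, g) = ((image_chart i v, image_chart j v), v, offset1 i j v \<diamondop> g)"
proof -
  have "f1 (P1_act \<Gamma> ((i, j), v, \<one>\<^bsub>G1 \<Gamma>\<^esub>) g) = P1_act \<Gamma> (f1 ((i, j), v, \<one>\<^bsub>G1 \<Gamma>\<^esub>)) g"
    using assms by (intro f1_act) (simp_all add: topspace_P1_top)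
  then show ?thesis
    using assms by (simp add: f1_unit P1_act_def)
qed

text \<open>The 2-cell by which f1 conjugates the transition of c between the charts i and j, twisted by
  the offsets of f0, into the transition of c' between their image charts.\<close>

definition transition_cell :: "'i \<Rightarrow> 'i \<Rightarrow> 'x \<Rightarrow> 'b" where
  "transition_cell i j v = offset1 i j v \<diamondop> \<iota> (fst c i j v) \<diamondop> inv1 (\<iota> (offset0 j v))"

lemma transition_cell:
  assumes "i \<in> I" "j \<in> I" "v \<in> U i" "v \<in> U j"
  shows transition_cell_closed: "transition_cell i j v \<in> C1"
    and tgt_transition_cell: "t (transition_cell i j v) = fst c' (image_chart i v) (image_chart j v) v"
    and src_transition_cell: "s (transition_cell i j v) = offset0 i v \<cdot> fst c i j v \<cdot> inv0 (offset0 j v)"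
proof -
  interpret c: pointwise_cocycle \<Gamma> "{i \<in> I. v \<in> U i}" "\<lambda>i j. fst c i j v" "\<lambda>i j k. snd c i j k v"
    by (rule c_at_point)
  interpret c': pointwise_cocycle \<Gamma> "{i \<in> I. v \<in> U i}" "\<lambda>i j. fst c' i j v" "\<lambda>i j k. snd c' i j k v"
    by (rule c'_at_point)
  show "transition_cell i j v \<in> C1"
    "t (transition_cell i j v) = fst c' (image_chart i v) (image_chart j v) v"
    "s (transition_cell i j v) = offset0 i v \<cdot> fst c i j v \<cdot> inv0 (offset0 j v)"
    using assms by (simp_all add: transition_cell_def tgt_offset1 src_offset1 group_normalize)
qed

lemma transition_cell_cocycle:
  assumes ijk: "i \<in> I" "j \<in> I" "k \<in> I" "v \<in> U i" "v \<in> U j" "v \<in> U k"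
  shows "snd c' (image_chart i v) (image_chart j v) (image_chart k v) v \<diamondop> transition_cell i j v
      \<diamondop> transition_cell j k v
    = transition_cell i k v \<diamondop> (\<iota> (offset0 k v) \<diamondop> inv1 (\<iota> (fst c i k v)) \<diamondop> snd c i j k v
      \<diamondop> \<iota> (fst c i j v) \<diamondop> \<iota> (fst c j k v) \<diamondop> inv1 (\<iota> (offset0 k v)))"
proof -
  interpret c: pointwise_cocycle \<Gamma> "{i \<in> I. v \<in> U i}" "\<lambda>i j. fst c i j v" "\<lambda>i j k. snd c i j k v"
    by (rule c_at_point)
  interpret c': pointwise_cocycle \<Gamma> "{i \<in> I. v \<in> U i}" "\<lambda>i j. fst c' i j v" "\<lambda>i j k. snd c' i j k v"
    by (rule c'_at_point)
  note [simp] = ijk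
  let ?x = "fst c i j v" and ?x' = "fst c' (image_chart i v) (image_chart j v) v"
    and ?e' = "snd c' (image_chart i v) (image_chart j v) (image_chart k v) v"
  define p where "p = ((i, j), v, \<one>\<^bsub>G1 \<Gamma>\<^esub>)"
  define q where "q = ((j, k), v, \<iota> (inv0 ?x))"
  have "f1 (P_cmp \<Gamma> c p q) = P_cmp \<Gamma> c' (f1 p) (f1 q)"
    by (rule f1_cmp) (simp_all add: p_def q_def topspace_P1_top P_tgt_def P_src_def)
  moreover have "P_cmp \<Gamma> c p q = ((i, k), v, snd c i j k v)"
    using cmp_idn_left[of "\<one>\<^bsub>G1 \<Gamma>\<^esub>"] by (simp add: P_cmp_def p_def q_def c.e_closed)
  ultimately have "offset1 i k v \<diamondop> snd c i j k v
      = ?e' \<diamondop> cmp \<Gamma> (offset1 i j v) (\<iota> ?x' \<diamondop> (offset1 j k v \<diamondop> \<iota> (inv0 ?x)))"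
    by (simp add: p_def q_def f1_unit f1_eq P_cmp_def c.e_closed)
  also have "cmp \<Gamma> (offset1 i j v) (\<iota> ?x' \<diamondop> (offset1 j k v \<diamondop> \<iota> (inv0 ?x)))
      = offset1 i j v \<diamondop> inv1 (\<iota> (t (offset1 i j v))) \<diamondop> (\<iota> ?x' \<diamondop> (offset1 j k v \<diamondop> \<iota> (inv0 ?x)))"
    by (rule cmp_eq_mult) (simp_all add: tgt_offset1 src_offset1 group_normalize)
  finally have "?e' \<diamondop> offset1 i j v \<diamondop> \<iota> ?x \<diamondop> inv1 (\<iota> (offset0 j v)) \<diamondop> offset1 j k v
      = offset1 i k v \<diamondop> snd c i j k v \<diamondop> \<iota> ?x"
    by (simp add: tgt_offset1 c.e_closed group_normalize)
  then have "(?e' \<diamondop> offset1 i j v \<diamondop> \<iota> ?x \<diamondop> inv1 (\<iota> (offset0 j v)) \<diamondop> offset1 j k v)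
        \<diamondop> (\<iota> (fst c j k v) \<diamondop> inv1 (\<iota> (offset0 k v)))
      = (offset1 i k v \<diamondop> snd c i j k v \<diamondop> \<iota> ?x) \<diamondop> (\<iota> (fst c j k v) \<diamondop> inv1 (\<iota> (offset0 k v)))"
    by simp
  then show ?thesis
    by (simp add: transition_cell_def c.e_closed group_normalize)
qed

text \<open>The cochains (a, d) exhibiting c and c' as cohomologous: a moves the chart i to the image
  chart of f0 and then applies the offset of f0; d collects the remaining 2-cells.\<close>

definition coboundary0 :: "'i \<Rightarrow> 'x \<Rightarrow> 'a" where
  "coboundary0 i v = fst c' i (image_chart i v) v \<cdot> offset0 i v"

definition reindexed_transition_cell :: "'i \<Rightarrow> 'i \<Rightarrow> 'x \<Rightarrow> 'b" where
  "reindexed_transition_cell i j v =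
     pointwise_cocycle.reindex_cell \<Gamma> (\<lambda>i j k. snd c' i j k v) i j (image_chart i v) (image_chart j v)
     \<diamondop> \<iota> (fst c' i (image_chart i v) v) \<diamondop> transition_cell i j v \<diamondop> inv1 (\<iota> (fst c' j (image_chart j v) v))"

definition coboundary1 :: "'i \<Rightarrow> 'i \<Rightarrow> 'x \<Rightarrow> 'b" where
  "coboundary1 i j v = inv1 (\<iota> (coboundary0 i v)) \<diamondop> reindexed_transition_cell i j v
     \<diamondop> \<iota> (coboundary0 j v) \<diamondop> inv1 (\<iota> (fst c i j v))"

lemma coboundary0_closed [simp]:
  assumes "i \<in> I" "v \<in> U i"
  shows "coboundary0 i v \<in> C0"
proof -
  interpret c': pointwise_cocycle \<Gamma> "{i \<in> I. v \<in> U i}" "\<lambda>i j. fst c' i j v" "\<lambda>i j k. snd c' i j k v"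
    by (rule c'_at_point)
  show ?thesis
    using assms by (simp add: coboundary0_def)
qed

lemma reindexed_transition_cell:
  assumes "i \<in> I" "j \<in> I" "v \<in> U i" "v \<in> U j"
  shows reindexed_transition_cell_closed: "reindexed_transition_cell i j v \<in> C1"
    and tgt_reindexed_transition_cell: "t (reindexed_transition_cell i j v) = fst c' i j v"
    and src_reindexed_transition_cell:
      "s (reindexed_transition_cell i j v) = coboundary0 i v \<cdot> fst c i j v \<cdot> inv0 (coboundary0 j v)"
proof -
  interpret c: pointwise_cocycle \<Gamma> "{i \<in> I. v \<in> U i}" "\<lambda>i j. fst c i j v" "\<lambda>i j k. snd c i j k v"
    by (rule c_at_point)
  interpret c': pointwise_cocycle \<Gamma> "{i \<in> I. v \<in> U i}" "\<lambda>i j. fst c' i j v" "\<lambda>i j k. snd c' i j k v"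
    by (rule c'_at_point)
  note [simp] = assms transition_cell[OF assms]
  let ?K = "image_chart i v" and ?L = "image_chart j v"
  have cell: "c'.reindex_cell i j ?K ?L \<in> E"
    by (simp add: c'.reindex_cell_kerE)
  show "reindexed_transition_cell i j v \<in> C1"
    using cell by (simp add: reindexed_transition_cell_def kerE_closed)
  have "t (reindexed_transition_cell i j v)
      = t (c'.reindex_cell i j ?K ?L) \<cdot> (fst c' i ?K v \<cdot> fst c' ?K ?L v \<cdot> inv0 (fst c' j ?L v))"
    using cell by (simp add: reindexed_transition_cell_def kerE_closed group_normalize)
  then show "t (reindexed_transition_cell i j v) = fst c' i j v"
    by (simp add: c'.tgt_reindex_cell)
  show "s (reindexed_transition_cell i j v) = coboundary0 i v \<cdot> fst c i j v \<cdot> inv0 (coboundary0 j v)"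
    using cell by (simp add: reindexed_transition_cell_def coboundary0_def kerE_closed group_normalize)
qed

lemma coboundary1_kerE:
  assumes "i \<in> I" "j \<in> I" "v \<in> U i" "v \<in> U j"
  shows "coboundary1 i j v \<in> E"
proof -
  interpret c: pointwise_cocycle \<Gamma> "{i \<in> I. v \<in> U i}" "\<lambda>i j. fst c i j v" "\<lambda>i j k. snd c i j k v"
    by (rule c_at_point)
  show ?thesis
    using assms by (simp add: coboundary1_def kerE_iff reindexed_transition_cell group_normalize)
qed

lemma cohomologous_transition:
  assumes "i \<in> I" "j \<in> I" "v \<in> U i" "v \<in> U j"
  shows "fst c' i j v = coboundary0 i v \<cdot> t (coboundary1 i j v) \<cdot> fst c i j v \<cdot> inv0 (coboundary0 j v)"
proof -
  interpret c: pointwise_cocycle \<Gamma> "{i \<in> I. v \<in> U i}" "\<lambda>i j. fst c i j v" "\<lambda>i j k. snd c i j k v"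
    by (rule c_at_point)
  interpret c': pointwise_cocycle \<Gamma> "{i \<in> I. v \<in> U i}" "\<lambda>i j. fst c' i j v" "\<lambda>i j k. snd c' i j k v"
    by (rule c'_at_point)
  show ?thesis
    using assms by (simp add: coboundary1_def reindexed_transition_cell group_normalize)
qed

lemma cohomologous_cell:
  assumes ijk: "i \<in> I" "j \<in> I" "k \<in> I" "v \<in> U i" "v \<in> U j" "v \<in> U k"
  shows "snd c' i j k v = conjact \<Gamma> (coboundary0 i v)
    (coboundary1 i k v \<diamondop> snd c i j k v \<diamondop> conjact \<Gamma> (fst c i j v) (inv1 (coboundary1 j k v))
      \<diamondop> inv1 (coboundary1 i j v))"
proof -
  interpret c: pointwise_cocycle \<Gamma> "{i \<in> I. v \<in> U i}" "\<lambda>i j. fst c i j v" "\<lambda>i j k. snd c i j k v"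
    by (rule c_at_point)
  interpret c': pointwise_cocycle \<Gamma> "{i \<in> I. v \<in> U i}" "\<lambda>i j. fst c' i j v" "\<lambda>i j k. snd c' i j k v"
    by (rule c'_at_point)
  note [simp] = ijk transition_cell_closed reindexed_transition_cell_closed c.e_closed
  let ?W = "inv1 (\<iota> (fst c i k v)) \<diamondop> snd c i j k v \<diamondop> \<iota> (fst c i j v) \<diamondop> \<iota> (fst c j k v)"
  have "snd c' i j k v \<diamondop> reindexed_transition_cell i j v \<diamondop> reindexed_transition_cell j k v
      = c'.reindex_cell i k (image_chart i v) (image_chart k v) \<diamondop> \<iota> (fst c' i (image_chart i v) v)
        \<diamondop> transition_cell i k v \<diamondop> (\<iota> (offset0 k v) \<diamondop> ?W \<diamondop> inv1 (\<iota> (offset0 k v)))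
        \<diamondop> inv1 (\<iota> (fst c' k (image_chart k v) v))"
    unfolding reindexed_transition_cell_def
    by (rule c'.reindex_transport)
      (use transition_cell_cocycle[OF ijk] in \<open>simp_all add: tgt_transition_cell group_normalize\<close>)
  then have rel: "snd c' i j k v \<diamondop> reindexed_transition_cell i j v \<diamondop> reindexed_transition_cell j k v
      = reindexed_transition_cell i k v \<diamondop> \<iota> (coboundary0 k v) \<diamondop> ?W \<diamondop> inv1 (\<iota> (coboundary0 k v))"
    by (simp add: reindexed_transition_cell_def coboundary0_def group_normalize)
  have "snd c' i j k v = (snd c' i j k v \<diamondop> reindexed_transition_cell i j v \<diamondop> reindexed_transition_cell j k v)
      \<diamondop> inv1 (reindexed_transition_cell j k v) \<diamondop> inv1 (reindexed_transition_cell i j v)"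
    by (simp add: group_normalize)
  also have "\<dots> = conjact \<Gamma> (coboundary0 i v)
    (coboundary1 i k v \<diamondop> snd c i j k v \<diamondop> conjact \<Gamma> (fst c i j v) (inv1 (coboundary1 j k v))
      \<diamondop> inv1 (coboundary1 i j v))"
    unfolding rel by (simp add: coboundary1_def conjact_eq group_normalize)
  finally show ?thesis .
qed

lemma continuous_map_unit_section0:
  assumes i: "i \<in> I"
  shows "continuous_map (subtopology X (U i)) (P0_top \<Gamma> X I U) (\<lambda>w. f0 (i, w, \<one>\<^bsub>G0 \<Gamma>\<^esub>))"
proof -
  have "continuous_map (subtopology X (U i)) (prod_topology (subtopology X (U i)) (T0 \<Gamma>)) (\<lambda>w. (w, \<one>\<^bsub>G0 \<Gamma>\<^esub>))"
    by (intro continuous_map_pairedI continuous_map_id continuous_map_const[THEN iffD2]) (simp_all add: topspace_T0)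
  moreover have "continuous_map (prod_topology (subtopology X (U i)) (T0 \<Gamma>)) (P0_top \<Gamma> X I U) (\<lambda>z. (i, z))"
    unfolding P0_top_def using i by (rule continuous_map_component_injection)
  ultimately show ?thesis
    using continuous_map_compose[OF continuous_map_compose f0_continuous] by (simp add: o_def)
qed

lemma continuous_map_unit_section1:
  assumes ij: "i \<in> I" "j \<in> I"
  shows "continuous_map (subtopology X (U i \<inter> U j)) (P1_top \<Gamma> X I U) (\<lambda>w. f1 ((i, j), w, \<one>\<^bsub>G1 \<Gamma>\<^esub>))"
proof -
  have "continuous_map (subtopology X (U i \<inter> U j)) (prod_topology (subtopology X (U i \<inter> U j)) (T1 \<Gamma>))
      (\<lambda>w. (w, \<one>\<^bsub>G1 \<Gamma>\<^esub>))"
    by (intro continuous_map_pairedI continuous_map_id continuous_map_const[THEN iffD2]) (simp_all add: topspace_T1)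
  moreover have "continuous_map (prod_topology (subtopology X (U i \<inter> U j)) (T1 \<Gamma>)) (P1_top \<Gamma> X I U)
      (\<lambda>z. ((i, j), z))"
    using continuous_map_component_injection[of "(i, j)" "I \<times> I"
        "\<lambda>ij. prod_topology (subtopology X (U (fst ij) \<inter> U (snd ij))) (T1 \<Gamma>)"] ij
    by (simp add: P1_top_eq)
  ultimately show ?thesis
    using continuous_map_compose[OF continuous_map_compose f1_continuous] by (simp add: o_def)
qed

lemma continuous_map_offset0:
  assumes "i \<in> I" "S \<subseteq> U i"
  shows "continuous_map (subtopology X S) (T0 \<Gamma>) (offset0 i)"
proof -
  have "continuous_map (P0_top \<Gamma> X I U) (T0 \<Gamma>) (\<lambda>p. snd (snd p))"
    unfolding P0_top_def by (rule continuous_map_from_sum_topology) (simp add: continuous_map_snd)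
  from continuous_map_compose[OF continuous_map_unit_section0[OF assms(1)] this]
  have "continuous_map (subtopology X (U i)) (T0 \<Gamma>) (offset0 i)"
    by (simp add: o_def offset0_def[abs_def])
  then show ?thesis
    using assms(2) by (rule continuous_map_from_subtopology_mono)
qed

lemma continuous_map_offset1:
  assumes "i \<in> I" "j \<in> I" "S \<subseteq> U i \<inter> U j"
  shows "continuous_map (subtopology X S) (T1 \<Gamma>) (offset1 i j)"
proof -
  have "continuous_map (P1_top \<Gamma> X I U) (T1 \<Gamma>) (\<lambda>p. snd (snd p))"
    unfolding P1_top_eq by (rule continuous_map_from_sum_topology) (simp add: continuous_map_snd)
  from continuous_map_compose[OF continuous_map_unit_section1[OF assms(1,2)] this]
  have "continuous_map (subtopology X (U i \<inter> U j)) (T1 \<Gamma>) (offset1 i j)"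
    by (simp add: o_def offset1_def[abs_def])
  then show ?thesis
    using assms(3) by (rule continuous_map_from_subtopology_mono)
qed

text \<open>The image chart is locally constant, since f0 is continuous into a disjoint union of charts.\<close>

lemma openin_image_chart_eq:
  assumes i: "i \<in> I" and k: "k \<in> I" and S: "S \<subseteq> U i"
  shows "openin (subtopology X S) {w \<in> topspace X \<inter> S. image_chart i w = k}"
proof -
  let ?V = "{k} \<times> topspace (prod_topology (subtopology X (U k)) (T0 \<Gamma>))"
  have "openin (P0_top \<Gamma> X I U) ?V"
    unfolding P0_top_def by (rule openin_sum_topology_component[OF k])
  then have "openin (subtopology X S) {w \<in> topspace (subtopology X S). f0 (i, w, \<one>\<^bsub>G0 \<Gamma>\<^esub>) \<in> ?V}"
    using continuous_map_from_subtopology_mono[OF continuous_map_unit_section0[OF i] S]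
    by (rule openin_continuous_map_preimage[rotated])
  moreover have "{w \<in> topspace (subtopology X S). f0 (i, w, \<one>\<^bsub>G0 \<Gamma>\<^esub>) \<in> ?V}
      = {w \<in> topspace X \<inter> S. image_chart i w = k}"
    using i S by (auto simp: f0_unit topspace_T0)
  ultimately show ?thesis
    by simp
qed

lemma continuous_map_chartwise:
  assumes ij: "i \<in> I" "j \<in> I" and S: "S \<subseteq> U i \<inter> U j"
    and F: "\<And>k l. k \<in> I \<Longrightarrow> l \<in> I \<Longrightarrow> continuous_map (subtopology X (S \<inter> U k \<inter> U l)) Y (F k l)"
    and f: "\<And>w. w \<in> S \<Longrightarrow> f w = F (image_chart i w) (image_chart j w) w"
  shows "continuous_map (subtopology X S) Y f"
proof (rule continuous_map_subtopology_locally_eq)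
  fix v assume v: "v \<in> topspace X \<inter> S"
  let ?k = "image_chart i v" and ?l = "image_chart j v"
  let ?T = "{w \<in> topspace X \<inter> S. image_chart i w = ?k} \<inter> {w \<in> topspace X \<inter> S. image_chart j w = ?l}"
  have kl: "?k \<in> I" "?l \<in> I"
    using ij v S by auto
  have "openin (subtopology X S) ?T"
    using ij kl S by (intro openin_Int openin_image_chart_eq) auto
  moreover have "?T \<subseteq> S \<inter> U ?k \<inter> U ?l"
    using ij S by (force dest: image_chart_mem(2))
  then have "continuous_map (subtopology X ?T) Y (F ?k ?l)"
    using F[OF kl] continuous_map_from_subtopology_mono by blast
  ultimately show "\<exists>T g. openin (subtopology X S) T \<and> v \<in> T \<and> continuous_map (subtopology X T) Y g
      \<and> (\<forall>w\<in>T. f w = g w)"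
    using v f by (intro exI[of _ ?T] exI[of _ "F ?k ?l"]) auto
qed

lemma continuous_map_coboundary0:
  assumes i: "i \<in> I"
  shows "continuous_map (subtopology X (U i)) (T0 \<Gamma>) (coboundary0 i)"
proof (rule continuous_map_chartwise[OF i i])
  fix k l assume "k \<in> I" "l \<in> I"
  then show "continuous_map (subtopology X (U i \<inter> U k \<inter> U l)) (T0 \<Gamma>) (\<lambda>w. fst c' i k w \<cdot> offset0 i w)"
    using i by (intro continuous_intros continuous_map_cocycle_fst[OF cocycle'] continuous_map_offset0) auto
qed (simp_all add: coboundary0_def)

lemma continuous_map_coboundary1:
  assumes ij: "i \<in> I" "j \<in> I"
  shows "continuous_map (subtopology X (U i \<inter> U j)) (subtopology (T1 \<Gamma>) E) (coboundary1 i j)"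
proof (rule continuous_map_into_subtopology)
  show "coboundary1 i j \<in> topspace (subtopology X (U i \<inter> U j)) \<rightarrow> E"
    using ij by (auto intro: coboundary1_kerE)
  show "continuous_map (subtopology X (U i \<inter> U j)) (T1 \<Gamma>) (coboundary1 i j)"
  proof (rule continuous_map_chartwise[OF ij])
    fix k l assume kl: "k \<in> I" "l \<in> I"
    let ?S = "U i \<inter> U j \<inter> U k \<inter> U l"
    show "continuous_map (subtopology X ?S) (T1 \<Gamma>) (\<lambda>w.
        inv1 (\<iota> (fst c' i k w \<cdot> offset0 i w)) \<diamondop> (inv1 (snd c' i j l w) \<diamondop> snd c' i k l w
        \<diamondop> \<iota> (fst c' i k w) \<diamondop> (offset1 i j w \<diamondop> \<iota> (fst c i j w) \<diamondop> inv1 (\<iota> (offset0 j w)))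
        \<diamondop> inv1 (\<iota> (fst c' j l w))) \<diamondop> \<iota> (fst c' j l w \<cdot> offset0 j w) \<diamondop> inv1 (\<iota> (fst c i j w)))"
      using ij kl
      by (intro continuous_intros continuous_map_cocycle_fst[OF cocycle'] continuous_map_cocycle_fst[OF cocycle]
          continuous_map_cocycle_snd[OF cocycle'] continuous_map_offset0 continuous_map_offset1) auto
  qed (auto simp: coboundary1_def reindexed_transition_cell_def coboundary0_def transition_cell_def
      pointwise_cocycle.reindex_cell_def[OF c'_at_point])
qed

lemma cohomologous: "cohomologous \<Gamma> X I U c c'"
  unfolding cohomologous_def
  by (intro exI[of _ coboundary0] exI[of _ coboundary1] conjI ballI)
    (auto simp: continuous_map_coboundary0 continuous_map_coboundary1 cohomologous_transition
      cohomologous_cell)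

end

context cover_2group
begin

lemma cohomologous_if_bundle_morphism:
  assumes "cech_cocycle \<Gamma> X I U c" "cech_cocycle \<Gamma> X I U c'" "bundle_morphism \<Gamma> X I U c c' f0 f1"
  shows "cohomologous \<Gamma> X I U c c'"
proof -
  interpret cech_bundle_morphism \<Gamma> X I U c c' f0 f1
    by (intro cech_bundle_morphism.intro cech_bundle_morphism_axioms.intro cover_2group_axioms assms)
  show ?thesis
    by (rule cohomologous)
qed

end

theorem lemma6:
  fixes \<Gamma> :: "('a, 'b) two_group" and X :: "'x topology" and I :: "'i set"
    and U :: "'i \<Rightarrow> 'x set"
    and c c' :: "('i \<Rightarrow> 'i \<Rightarrow> 'x \<Rightarrow> 'a) \<times> ('i \<Rightarrow> 'i \<Rightarrow> 'i \<Rightarrow> 'x \<Rightarrow> 'b)"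
  assumes "topological_2group \<Gamma>"
    and "open_cover X I U"
    and "cech_cocycle \<Gamma> X I U c"
    and "cech_cocycle \<Gamma> X I U c'"
  shows "cohomologous \<Gamma> X I U c c' \<longleftrightarrow> (\<exists>f0 f1. bundle_morphism \<Gamma> X I U c c' f0 f1)"
proof -
  interpret cover_2group \<Gamma> X I U
    by (intro cover_2group.intro top_2group.intro cover_2group_axioms.intro assms(1,2))
  show ?thesis
    using assms(3,4) bundle_morphism_if_cohomologous cohomologous_if_bundle_morphism by blast
qed

end
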